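(* Let $\mathcal{T},\mathcal{T}'$ be essentially small triangulated categories and let $F:\mathcal{T}\to\mathcal{T}'$ be an exact functor which is a triangle equivalence up to direct summands, i.e. $F$ is fully faithful and every object of $\mathcal{T}'$ is a direct summand of $F(M)$ for some $M\in\mathcal{T}$. For a thick subcategory $\mathcal{Y}$ of $\mathcal{T}'$ put $F^{-1}(\mathcal{Y}):=\{M\in\mathcal{T}\mid F(M)\in\mathcal{Y}\}$. Then: (1) The map $\operatorname{Th}(\mathcal{T}')\to\operatorname{Th}(\mathcal{T})$, $\mathcal{Y}\mapsto F^{-1}(\mathcal{Y})$, is a lattice isomorphism. (2) For a thick subcategory $\mathcal{Q}$ of $\mathcal{T}'$, $\mathcal{Q}$ is a prime thick subcategory of $\mathcal{T}'$ if and only if $F^{-1}(\mathcal{Q})$ is a prime thick subcategory of $\mathcal{T}$. (3) The map ${}^aF:\operatorname{Spec}_\triangle(\mathcal{T}')\to\operatorname{Spec}_\triangle(\mathcal{T})$, $\mathcal{P}\mapsto F^{-1}(\mathcal{P})$, is a homeomorphism.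
   Context: All subcategories are full and additive. $\operatorname{Th}(\mathcal{T})$ denotes the set of thick subcategories of $\mathcal{T}$, ordered by inclusion. A thick subcategory $\mathcal{P}$ of $\mathcal{T}$ is called prime if among all thick subcategories $\mathcal{X}$ of $\mathcal{T}$ with $\mathcal{P}\subsetneq\mathcal{X}$ there is a unique minimal one. $\operatorname{Spec}_\triangle(\mathcal{T})$ is the set of prime thick subcategories of $\mathcal{T}$, topologized by declaring the closed subsets to be the sets $\mathsf{Z}(\mathcal{E}) := \{\mathcal{P}\in\operatorname{Spec}_\triangle(\mathcal{T})\mid \mathcal{P}\cap\mathcal{E}=\emptyset\}$ for families $\mathcal{E}$ of objects of $\mathcal{T}$. *)

theory Defs
  imports Main
begin

text \<open>Objects live in a set ob of some type 'o, hence every category here is small.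
 Composition, addition, zero and negation are indexed by objects, so hom-sets of
 different object pairs may overlap in the type 'm without harm.
 cmp X Y Z g f denotes the composite g o f of f : X -> Y and g : Y -> Z.\<close>

record ('o, 'm) tricat =
  ob    :: "'o set"
  hom   :: "'o \<Rightarrow> 'o \<Rightarrow> 'm set"
  cmp   :: "'o \<Rightarrow> 'o \<Rightarrow> 'o \<Rightarrow> 'm \<Rightarrow> 'm \<Rightarrow> 'm"
  idm   :: "'o \<Rightarrow> 'm"
  addm  :: "'o \<Rightarrow> 'o \<Rightarrow> 'm \<Rightarrow> 'm \<Rightarrow> 'm"
  zerom :: "'o \<Rightarrow> 'o \<Rightarrow> 'm"
  negm  :: "'o \<Rightarrow> 'o \<Rightarrow> 'm \<Rightarrow> 'm"
  sho   :: "'o \<Rightarrow> 'o"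
  shm   :: "'o \<Rightarrow> 'o \<Rightarrow> 'm \<Rightarrow> 'm"
  dist  :: "('o \<times> 'o \<times> 'o \<times> 'm \<times> 'm \<times> 'm) set"

definition is_category :: "('o, 'm, 'z) tricat_scheme \<Rightarrow> bool" where
  "is_category C \<longleftrightarrow>
     (\<forall>X\<in>ob C. idm C X \<in> hom C X X) \<and>
     (\<forall>X\<in>ob C. \<forall>Y\<in>ob C. \<forall>Z\<in>ob C. \<forall>f\<in>hom C X Y. \<forall>g\<in>hom C Y Z.
        cmp C X Y Z g f \<in> hom C X Z) \<and>
     (\<forall>X\<in>ob C. \<forall>Y\<in>ob C. \<forall>Z\<in>ob C. \<forall>W\<in>ob C. \<forall>f\<in>hom C X Y. \<forall>g\<in>hom C Y Z. \<forall>h\<in>hom C Z W.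
        cmp C X Z W h (cmp C X Y Z g f) = cmp C X Y W (cmp C Y Z W h g) f) \<and>
     (\<forall>X\<in>ob C. \<forall>Y\<in>ob C. \<forall>f\<in>hom C X Y.
        cmp C X Y Y (idm C Y) f = f \<and> cmp C X X Y f (idm C X) = f)"

definition is_iso :: "('o, 'm, 'z) tricat_scheme \<Rightarrow> 'o \<Rightarrow> 'o \<Rightarrow> 'm \<Rightarrow> bool" where
  "is_iso C X Y f \<longleftrightarrow> f \<in> hom C X Y \<and>
     (\<exists>g\<in>hom C Y X. cmp C X Y X g f = idm C X \<and> cmp C Y X Y f g = idm C Y)"

definition is_zero_obj :: "('o, 'm, 'z) tricat_scheme \<Rightarrow> 'o \<Rightarrow> bool" where
  "is_zero_obj C Z \<longleftrightarrow> Z \<in> ob C \<and>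
     (\<forall>X\<in>ob C. hom C Z X = {zerom C Z X} \<and> hom C X Z = {zerom C X Z})"

definition is_biproduct :: "('o, 'm, 'z) tricat_scheme \<Rightarrow> 'o \<Rightarrow> 'o \<Rightarrow> 'o \<Rightarrow> 'm \<Rightarrow> 'm \<Rightarrow> 'm \<Rightarrow> 'm \<Rightarrow> bool" where
  "is_biproduct C X Y S i1 i2 p1 p2 \<longleftrightarrow>
     X \<in> ob C \<and> Y \<in> ob C \<and> S \<in> ob C \<and>
     i1 \<in> hom C X S \<and> i2 \<in> hom C Y S \<and> p1 \<in> hom C S X \<and> p2 \<in> hom C S Y \<and>
     cmp C X S X p1 i1 = idm C X \<and> cmp C Y S Y p2 i2 = idm C Y \<and>
     cmp C X S Y p2 i1 = zerom C X Y \<and> cmp C Y S X p1 i2 = zerom C Y X \<and>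
     addm C S S (cmp C S X S i1 p1) (cmp C S Y S i2 p2) = idm C S"

definition is_additive :: "('o, 'm, 'z) tricat_scheme \<Rightarrow> bool" where
  "is_additive C \<longleftrightarrow> is_category C \<and>
     (\<forall>X\<in>ob C. \<forall>Y\<in>ob C.
        zerom C X Y \<in> hom C X Y \<and>
        (\<forall>f\<in>hom C X Y. \<forall>g\<in>hom C X Y. addm C X Y f g \<in> hom C X Y) \<and>
        (\<forall>f\<in>hom C X Y. negm C X Y f \<in> hom C X Y) \<and>
        (\<forall>f\<in>hom C X Y. \<forall>g\<in>hom C X Y. \<forall>h\<in>hom C X Y.
           addm C X Y (addm C X Y f g) h = addm C X Y f (addm C X Y g h)) \<and>
        (\<forall>f\<in>hom C X Y. \<forall>g\<in>hom C X Y. addm C X Y f g = addm C X Y g f) \<and>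
        (\<forall>f\<in>hom C X Y. addm C X Y f (zerom C X Y) = f) \<and>
        (\<forall>f\<in>hom C X Y. addm C X Y f (negm C X Y f) = zerom C X Y)) \<and>
     (\<forall>X\<in>ob C. \<forall>Y\<in>ob C. \<forall>Z\<in>ob C. \<forall>f\<in>hom C X Y. \<forall>f'\<in>hom C X Y. \<forall>g\<in>hom C Y Z. \<forall>g'\<in>hom C Y Z.
        cmp C X Y Z g (addm C X Y f f') = addm C X Z (cmp C X Y Z g f) (cmp C X Y Z g f') \<and>
        cmp C X Y Z (addm C Y Z g g') f = addm C X Z (cmp C X Y Z g f) (cmp C X Y Z g' f)) \<and>
     (\<exists>Z. is_zero_obj C Z) \<and>
     (\<forall>X\<in>ob C. \<forall>Y\<in>ob C. \<exists>S i1 i2 p1 p2. is_biproduct C X Y S i1 i2 p1 p2)"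

definition shift_ok :: "('o, 'm, 'z) tricat_scheme \<Rightarrow> bool" where
  "shift_ok C \<longleftrightarrow>
     (\<forall>X\<in>ob C. sho C X \<in> ob C) \<and>
     (\<forall>X\<in>ob C. \<forall>Y\<in>ob C. bij_betw (shm C X Y) (hom C X Y) (hom C (sho C X) (sho C Y))) \<and>
     (\<forall>X\<in>ob C. shm C X X (idm C X) = idm C (sho C X)) \<and>
     (\<forall>X\<in>ob C. \<forall>Y\<in>ob C. \<forall>Z\<in>ob C. \<forall>f\<in>hom C X Y. \<forall>g\<in>hom C Y Z.
        shm C X Z (cmp C X Y Z g f) = cmp C (sho C X) (sho C Y) (sho C Z) (shm C Y Z g) (shm C X Y f)) \<and>
     (\<forall>X\<in>ob C. \<forall>Y\<in>ob C. \<forall>f\<in>hom C X Y. \<forall>g\<in>hom C X Y.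
        shm C X Y (addm C X Y f g) = addm C (sho C X) (sho C Y) (shm C X Y f) (shm C X Y g)) \<and>
     (\<forall>Y\<in>ob C. \<exists>X\<in>ob C. \<exists>u. is_iso C (sho C X) Y u)"

definition is_triangle :: "('o, 'm, 'z) tricat_scheme \<Rightarrow> 'o \<Rightarrow> 'o \<Rightarrow> 'o \<Rightarrow> 'm \<Rightarrow> 'm \<Rightarrow> 'm \<Rightarrow> bool" where
  "is_triangle C X Y Z f g h \<longleftrightarrow> X \<in> ob C \<and> Y \<in> ob C \<and> Z \<in> ob C \<and>
     f \<in> hom C X Y \<and> g \<in> hom C Y Z \<and> h \<in> hom C Z (sho C X)"

definition tri_morph :: "('o, 'm, 'z) tricat_scheme \<Rightarrow> 'o \<Rightarrow> 'o \<Rightarrow> 'o \<Rightarrow> 'm \<Rightarrow> 'm \<Rightarrow> 'm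
    \<Rightarrow> 'o \<Rightarrow> 'o \<Rightarrow> 'o \<Rightarrow> 'm \<Rightarrow> 'm \<Rightarrow> 'm \<Rightarrow> 'm \<Rightarrow> 'm \<Rightarrow> 'm \<Rightarrow> bool" where
  "tri_morph C X Y Z f g h X' Y' Z' f' g' h' a b c \<longleftrightarrow>
     a \<in> hom C X X' \<and> b \<in> hom C Y Y' \<and> c \<in> hom C Z Z' \<and>
     cmp C X Y Y' b f = cmp C X X' Y' f' a \<and>
     cmp C Y Z Z' c g = cmp C Y Y' Z' g' b \<and>
     cmp C Z (sho C X) (sho C X') (shm C X X' a) h = cmp C Z Z' (sho C X') h' c"

definition is_triangulated :: "('o, 'm, 'z) tricat_scheme \<Rightarrow> bool" where
  "is_triangulated C \<longleftrightarrow> is_additive C \<and> shift_ok C \<and>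
     (\<forall>(X,Y,Z,f,g,h)\<in>dist C. is_triangle C X Y Z f g h) \<and>
     \<comment> \<open>TR1: closure under isomorphic triangles\<close>
     (\<forall>X Y Z f g h X' Y' Z' f' g' h' a b c.
        (X,Y,Z,f,g,h) \<in> dist C \<longrightarrow> is_triangle C X' Y' Z' f' g' h' \<longrightarrow>
        tri_morph C X Y Z f g h X' Y' Z' f' g' h' a b c \<longrightarrow>
        is_iso C X X' a \<longrightarrow> is_iso C Y Y' b \<longrightarrow> is_iso C Z Z' c \<longrightarrow>
        (X',Y',Z',f',g',h') \<in> dist C) \<and>
     \<comment> \<open>TR1: X --id--> X --> 0 --> Sigma X is distinguished\<close>
     (\<forall>X\<in>ob C. \<forall>Z. is_zero_obj C Z \<longrightarrow>
        (X, X, Z, idm C X, zerom C X Z, zerom C Z (sho C X)) \<in> dist C) \<and>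
     \<comment> \<open>TR1: every morphism extends to a distinguished triangle\<close>
     (\<forall>X\<in>ob C. \<forall>Y\<in>ob C. \<forall>f\<in>hom C X Y. \<exists>Z g h. (X,Y,Z,f,g,h) \<in> dist C) \<and>
     \<comment> \<open>TR2: rotation\<close>
     (\<forall>X Y Z f g h. is_triangle C X Y Z f g h \<longrightarrow>
        ((X,Y,Z,f,g,h) \<in> dist C \<longleftrightarrow>
         (Y, Z, sho C X, g, h, negm C (sho C X) (sho C Y) (shm C X Y f)) \<in> dist C)) \<and>
     \<comment> \<open>TR3: completion of morphisms of triangles\<close>
     (\<forall>X Y Z f g h X' Y' Z' f' g' h' a b.
        (X,Y,Z,f,g,h) \<in> dist C \<longrightarrow> (X',Y',Z',f',g',h') \<in> dist C \<longrightarrow>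
        a \<in> hom C X X' \<longrightarrow> b \<in> hom C Y Y' \<longrightarrow>
        cmp C X Y Y' b f = cmp C X X' Y' f' a \<longrightarrow>
        (\<exists>c. tri_morph C X Y Z f g h X' Y' Z' f' g' h' a b c)) \<and>
     \<comment> \<open>TR4: octahedral axiom\<close>
     (\<forall>X Y Z Z' X' Y' f g f2 f3 g2 g3 h2 h3.
        (X,Y,Z',f,f2,f3) \<in> dist C \<longrightarrow> (Y,Z,X',g,g2,g3) \<in> dist C \<longrightarrow>
        (X,Z,Y',cmp C X Y Z g f,h2,h3) \<in> dist C \<longrightarrow>
        (\<exists>u v. (Z', Y', X', u, v, cmp C X' (sho C Y) (sho C Z') (shm C Y Z' f2) g3) \<in> dist C \<and>
           cmp C Y Z' Y' u f2 = cmp C Y Z Y' h2 g \<and>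
           cmp C Z' Y' (sho C X) h3 u = f3 \<and>
           cmp C Z Y' X' v h2 = g2 \<and>
           cmp C Y' X' (sho C Y) g3 v = cmp C Y' (sho C X) (sho C Y) (shm C X Y f) h3))"

text \<open>An exact functor is given by its object map fo, morphism map fm (fm X Y on hom X Y)
 and a natural isomorphism phi X : F(Sigma X) -> Sigma'(F X).\<close>
definition exact_functor :: "('o, 'm, 'z) tricat_scheme \<Rightarrow> ('p, 'n, 'y) tricat_scheme
    \<Rightarrow> ('o \<Rightarrow> 'p) \<Rightarrow> ('o \<Rightarrow> 'o \<Rightarrow> 'm \<Rightarrow> 'n) \<Rightarrow> ('o \<Rightarrow> 'n) \<Rightarrow> bool" where
  "exact_functor C D fo fm phi \<longleftrightarrow>
     (\<forall>X\<in>ob C. fo X \<in> ob D) \<and>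
     (\<forall>X\<in>ob C. \<forall>Y\<in>ob C. \<forall>f\<in>hom C X Y. fm X Y f \<in> hom D (fo X) (fo Y)) \<and>
     (\<forall>X\<in>ob C. fm X X (idm C X) = idm D (fo X)) \<and>
     (\<forall>X\<in>ob C. \<forall>Y\<in>ob C. \<forall>Z\<in>ob C. \<forall>f\<in>hom C X Y. \<forall>g\<in>hom C Y Z.
        fm X Z (cmp C X Y Z g f) = cmp D (fo X) (fo Y) (fo Z) (fm Y Z g) (fm X Y f)) \<and>
     (\<forall>X\<in>ob C. \<forall>Y\<in>ob C. \<forall>f\<in>hom C X Y. \<forall>g\<in>hom C X Y.
        fm X Y (addm C X Y f g) = addm D (fo X) (fo Y) (fm X Y f) (fm X Y g)) \<and>
     (\<forall>X\<in>ob C. is_iso D (fo (sho C X)) (sho D (fo X)) (phi X)) \<and>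
     (\<forall>X\<in>ob C. \<forall>Y\<in>ob C. \<forall>f\<in>hom C X Y.
        cmp D (fo (sho C X)) (fo (sho C Y)) (sho D (fo Y)) (phi Y) (fm (sho C X) (sho C Y) (shm C X Y f))
        = cmp D (fo (sho C X)) (sho D (fo X)) (sho D (fo Y)) (shm D (fo X) (fo Y) (fm X Y f)) (phi X)) \<and>
     (\<forall>(X,Y,Z,f,g,h)\<in>dist C.
        (fo X, fo Y, fo Z, fm X Y f, fm Y Z g,
         cmp D (fo Z) (fo (sho C X)) (sho D (fo X)) (phi X) (fm Z (sho C X) h)) \<in> dist D)"

definition fully_faithful :: "('o, 'm, 'z) tricat_scheme \<Rightarrow> ('p, 'n, 'y) tricat_scheme
    \<Rightarrow> ('o \<Rightarrow> 'p) \<Rightarrow> ('o \<Rightarrow> 'o \<Rightarrow> 'm \<Rightarrow> 'n) \<Rightarrow> bool" where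
  "fully_faithful C D fo fm \<longleftrightarrow>
     (\<forall>X\<in>ob C. \<forall>Y\<in>ob C. bij_betw (fm X Y) (hom C X Y) (hom D (fo X) (fo Y)))"

definition is_summand :: "('o, 'm, 'z) tricat_scheme \<Rightarrow> 'o \<Rightarrow> 'o \<Rightarrow> bool" where
  "is_summand C X Y \<longleftrightarrow> (\<exists>W i1 i2 p1 p2. is_biproduct C X W Y i1 i2 p1 p2)"

text \<open>Subcategories are full, so they are identified with their sets of objects.\<close>
definition thick :: "('o, 'm, 'z) tricat_scheme \<Rightarrow> 'o set \<Rightarrow> bool" where
  "thick C S \<longleftrightarrow> S \<subseteq> ob C \<and> S \<noteq> {} \<and>
     (\<forall>X\<in>ob C. X \<in> S \<longleftrightarrow> sho C X \<in> S) \<and>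
     (\<forall>X\<in>ob C. \<forall>Y\<in>ob C. \<forall>u. is_iso C X Y u \<longrightarrow> X \<in> S \<longrightarrow> Y \<in> S) \<and>
     (\<forall>(X,Y,Z,f,g,h)\<in>dist C.
        (X \<in> S \<longrightarrow> Y \<in> S \<longrightarrow> Z \<in> S) \<and> (Y \<in> S \<longrightarrow> Z \<in> S \<longrightarrow> X \<in> S) \<and>
        (Z \<in> S \<longrightarrow> X \<in> S \<longrightarrow> Y \<in> S)) \<and>
     (\<forall>X\<in>ob C. \<forall>Y\<in>S. is_summand C X Y \<longrightarrow> X \<in> S)"

definition Th :: "('o, 'm, 'z) tricat_scheme \<Rightarrow> 'o set set" where
  "Th C = {S. thick C S}"

text \<open>Join in the lattice Th(C): smallest thick subcategory containing both (meet is intersection).\<close>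
definition thick_join :: "('o, 'm, 'z) tricat_scheme \<Rightarrow> 'o set \<Rightarrow> 'o set \<Rightarrow> 'o set" where
  "thick_join C A B = \<Inter>{S. thick C S \<and> A \<union> B \<subseteq> S}"

definition prime_thick :: "('o, 'm, 'z) tricat_scheme \<Rightarrow> 'o set \<Rightarrow> bool" where
  "prime_thick C P \<longleftrightarrow> thick C P \<and>
     (\<exists>!X. thick C X \<and> P \<subset> X \<and> \<not> (\<exists>X'. thick C X' \<and> P \<subset> X' \<and> X' \<subset> X))"

definition Spec :: "('o, 'm, 'z) tricat_scheme \<Rightarrow> 'o set set" where
  "Spec C = {P. prime_thick C P}"

definition Zset :: "('o, 'm, 'z) tricat_scheme \<Rightarrow> 'o set \<Rightarrow> 'o set set" where
  "Zset C E = {P \<in> Spec C. P \<inter> E = {}}"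

text \<open>Closed subsets of Spec(C) are exactly the sets Zset C E, E a family of objects.\<close>
definition spec_closed :: "('o, 'm, 'z) tricat_scheme \<Rightarrow> 'o set set \<Rightarrow> bool" where
  "spec_closed C A \<longleftrightarrow> (\<exists>E. E \<subseteq> ob C \<and> A = Zset C E)"

definition preim :: "('o, 'm, 'z) tricat_scheme \<Rightarrow> ('o \<Rightarrow> 'p) \<Rightarrow> 'p set \<Rightarrow> 'o set" where
  "preim C fo Y = {M \<in> ob C. fo M \<in> Y}"

definition spec_homeo :: "('p, 'n, 'y) tricat_scheme \<Rightarrow> ('o, 'm, 'z) tricat_scheme
    \<Rightarrow> ('p set \<Rightarrow> 'o set) \<Rightarrow> bool" where
  "spec_homeo D C g \<longleftrightarrow> bij_betw g (Spec D) (Spec C) \<and>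
     (\<forall>A. spec_closed C A \<longrightarrow> spec_closed D {P \<in> Spec D. g P \<in> A}) \<and>
     (\<forall>B. spec_closed D B \<longrightarrow> spec_closed C (g ` B))"

end

theory Submission
  imports Defs
begin

text \<open>
  Since \<open>F\<close> is fully faithful, a thick subcategory \<open>S\<close> of \<open>T\<close> is recovered as the preimage of
  the class of retracts of objects \<open>F M\<close>, \<open>M \<in> S\<close>. This class is thick: for closure under cones,
  retractions of two vertices of a triangle onto a triangle in the image of \<open>F\<close> induce an endomorphism
  \<open>\<phi>\<close> of the third vertex fixing the two adjacent maps, and such a \<open>\<phi>\<close> is an isomorphism because
  \<open>(\<phi> - 1)\<^sup>2 = 0\<close>. So \<open>Y \<mapsto> F\<^sup>-\<^sup>1(Y)\<close> is onto. It is injective because every \<open>X\<close> with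
  \<open>X \<oplus> W = F M\<close> is a retract of \<open>F K\<close>, where \<open>K\<close> is the cone of a lift of the idempotent projecting
  onto \<open>W\<close>, and by the octahedral axiom \<open>F K\<close> lies in the thick closure of \<open>X\<close>. Hence \<open>F\<^sup>-\<^sup>1\<close> is an
  order isomorphism of the lattices of thick subcategories, so it preserves meets, joins and the unique
  minimal strict upper bounds that define primes. On spectra, \<open>Z(E)\<close> pulls back to \<open>Z(F(E))\<close>, and
  \<open>Z(E')\<close> is mapped to \<open>Z(N(E'))\<close>, where \<open>X\<close> is a retract of \<open>F(N X)\<close> and \<open>F(N X)\<close> lies in the thick
  closure of \<open>X\<close>.
\<close>

section \<open>Additive structure\<close>

locale triangulated_cat =
  fixes C :: "('o, 'm, 'z) tricat_scheme"
  assumes triangulated: "is_triangulated C"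
begin

lemma additive: "is_additive C"
  using triangulated unfolding is_triangulated_def by meson

lemma category: "is_category C"
  using additive unfolding is_additive_def by meson

lemma shift: "shift_ok C"
  using triangulated unfolding is_triangulated_def by meson

lemma idm_closed [simp, intro]: "X \<in> ob C \<Longrightarrow> idm C X \<in> hom C X X"
  using category unfolding is_category_def by meson

lemma cmp_closed [intro]:
  "X \<in> ob C \<Longrightarrow> Y \<in> ob C \<Longrightarrow> Z \<in> ob C \<Longrightarrow> f \<in> hom C X Y \<Longrightarrow> g \<in> hom C Y Z
    \<Longrightarrow> cmp C X Y Z g f \<in> hom C X Z"
  using category unfolding is_category_def by meson

lemma cmp_assoc:
  "X \<in> ob C \<Longrightarrow> Y \<in> ob C \<Longrightarrow> Z \<in> ob C \<Longrightarrow> W \<in> ob C \<Longrightarrow>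
    f \<in> hom C X Y \<Longrightarrow> g \<in> hom C Y Z \<Longrightarrow> h \<in> hom C Z W \<Longrightarrow>
    cmp C X Z W h (cmp C X Y Z g f) = cmp C X Y W (cmp C Y Z W h g) f"
  using category unfolding is_category_def by meson

lemma cmp_idm_left [simp]:
  "X \<in> ob C \<Longrightarrow> Y \<in> ob C \<Longrightarrow> f \<in> hom C X Y \<Longrightarrow> cmp C X Y Y (idm C Y) f = f"
  using category unfolding is_category_def by meson

lemma cmp_idm_right [simp]:
  "X \<in> ob C \<Longrightarrow> Y \<in> ob C \<Longrightarrow> f \<in> hom C X Y \<Longrightarrow> cmp C X X Y f (idm C X) = f"
  using category unfolding is_category_def by meson

lemma zerom_closed [simp, intro]: "X \<in> ob C \<Longrightarrow> Y \<in> ob C \<Longrightarrow> zerom C X Y \<in> hom C X Y"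
  using additive unfolding is_additive_def by meson

lemma addm_closed [intro]:
  "X \<in> ob C \<Longrightarrow> Y \<in> ob C \<Longrightarrow> f \<in> hom C X Y \<Longrightarrow> g \<in> hom C X Y \<Longrightarrow> addm C X Y f g \<in> hom C X Y"
  using additive unfolding is_additive_def by meson

lemma negm_closed [intro]:
  "X \<in> ob C \<Longrightarrow> Y \<in> ob C \<Longrightarrow> f \<in> hom C X Y \<Longrightarrow> negm C X Y f \<in> hom C X Y"
  using additive unfolding is_additive_def by meson

lemma addm_assoc:
  "X \<in> ob C \<Longrightarrow> Y \<in> ob C \<Longrightarrow> f \<in> hom C X Y \<Longrightarrow> g \<in> hom C X Y \<Longrightarrow> h \<in> hom C X Y \<Longrightarrow>
    addm C X Y (addm C X Y f g) h = addm C X Y f (addm C X Y g h)"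
  using additive unfolding is_additive_def by meson

lemma addm_commute:
  "X \<in> ob C \<Longrightarrow> Y \<in> ob C \<Longrightarrow> f \<in> hom C X Y \<Longrightarrow> g \<in> hom C X Y \<Longrightarrow> addm C X Y f g = addm C X Y g f"
  using additive unfolding is_additive_def by meson

lemma addm_zerom_right [simp]:
  "X \<in> ob C \<Longrightarrow> Y \<in> ob C \<Longrightarrow> f \<in> hom C X Y \<Longrightarrow> addm C X Y f (zerom C X Y) = f"
  using additive unfolding is_additive_def by meson

lemma addm_negm_right [simp]:
  "X \<in> ob C \<Longrightarrow> Y \<in> ob C \<Longrightarrow> f \<in> hom C X Y \<Longrightarrow> addm C X Y f (negm C X Y f) = zerom C X Y"
  using additive unfolding is_additive_def by meson

lemma cmp_addm_right:
  "X \<in> ob C \<Longrightarrow> Y \<in> ob C \<Longrightarrow> Z \<in> ob C \<Longrightarrow> f \<in> hom C X Y \<Longrightarrow> f' \<in> hom C X Y \<Longrightarrow> g \<in> hom C Y Z \<Longrightarrow>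
    cmp C X Y Z g (addm C X Y f f') = addm C X Z (cmp C X Y Z g f) (cmp C X Y Z g f')"
  using additive unfolding is_additive_def by meson

lemma cmp_addm_left:
  "X \<in> ob C \<Longrightarrow> Y \<in> ob C \<Longrightarrow> Z \<in> ob C \<Longrightarrow> f \<in> hom C X Y \<Longrightarrow> g \<in> hom C Y Z \<Longrightarrow> g' \<in> hom C Y Z \<Longrightarrow>
    cmp C X Y Z (addm C Y Z g g') f = addm C X Z (cmp C X Y Z g f) (cmp C X Y Z g' f)"
  using additive unfolding is_additive_def by meson

lemma addm_zerom_left [simp]:
  "X \<in> ob C \<Longrightarrow> Y \<in> ob C \<Longrightarrow> f \<in> hom C X Y \<Longrightarrow> addm C X Y (zerom C X Y) f = f"
  using addm_commute[of X Y "zerom C X Y" f] by simp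

lemma addm_negm_left [simp]:
  "X \<in> ob C \<Longrightarrow> Y \<in> ob C \<Longrightarrow> f \<in> hom C X Y \<Longrightarrow> addm C X Y (negm C X Y f) f = zerom C X Y"
  using addm_commute[of X Y "negm C X Y f" f] by (simp add: negm_closed)

lemma addm_left_cancel:
  assumes "X \<in> ob C" "Y \<in> ob C" "a \<in> hom C X Y" "b \<in> hom C X Y" "c \<in> hom C X Y"
    and "addm C X Y a b = addm C X Y a c"
  shows "b = c"
proof -
  have "b = addm C X Y (addm C X Y (negm C X Y a) a) b"
    using assms by simp
  also have "\<dots> = addm C X Y (negm C X Y a) (addm C X Y a b)"
    using assms(1-5) by (intro addm_assoc) auto
  also have "\<dots> = addm C X Y (negm C X Y a) (addm C X Y a c)"
    by (simp only: assms(6))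
  also have "\<dots> = addm C X Y (addm C X Y (negm C X Y a) a) c"
    using assms(1-5) by (intro addm_assoc[symmetric]) auto
  also have "\<dots> = c"
    using assms by simp
  finally show ?thesis .
qed

lemma negm_unique:
  "X \<in> ob C \<Longrightarrow> Y \<in> ob C \<Longrightarrow> a \<in> hom C X Y \<Longrightarrow> b \<in> hom C X Y \<Longrightarrow>
    addm C X Y a b = zerom C X Y \<Longrightarrow> b = negm C X Y a"
  using addm_left_cancel[of X Y a b "negm C X Y a"] by (simp add: negm_closed)

lemma addm_idem_zerom:
  "X \<in> ob C \<Longrightarrow> Y \<in> ob C \<Longrightarrow> a \<in> hom C X Y \<Longrightarrow> addm C X Y a a = a \<Longrightarrow> a = zerom C X Y"
  using addm_left_cancel[of X Y a a "zerom C X Y"] by simp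

lemma negm_negm [simp]:
  "X \<in> ob C \<Longrightarrow> Y \<in> ob C \<Longrightarrow> a \<in> hom C X Y \<Longrightarrow> negm C X Y (negm C X Y a) = a"
  using negm_unique[of X Y "negm C X Y a" a] by (simp add: negm_closed)

lemma negm_inj:
  "X \<in> ob C \<Longrightarrow> Y \<in> ob C \<Longrightarrow> a \<in> hom C X Y \<Longrightarrow> b \<in> hom C X Y \<Longrightarrow>
    negm C X Y a = negm C X Y b \<Longrightarrow> a = b"
  by (metis negm_negm)

lemma negm_zerom [simp]: "X \<in> ob C \<Longrightarrow> Y \<in> ob C \<Longrightarrow> negm C X Y (zerom C X Y) = zerom C X Y"
  using negm_unique[of X Y "zerom C X Y" "zerom C X Y"] by simp

lemma negm_eq_zerom:
  "X \<in> ob C \<Longrightarrow> Y \<in> ob C \<Longrightarrow> a \<in> hom C X Y \<Longrightarrow> negm C X Y a = zerom C X Y \<Longrightarrow> a = zerom C X Y"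
  using negm_negm[of X Y a] by simp

lemma addm_left_commute:
  "X \<in> ob C \<Longrightarrow> Y \<in> ob C \<Longrightarrow> a \<in> hom C X Y \<Longrightarrow> b \<in> hom C X Y \<Longrightarrow> c \<in> hom C X Y \<Longrightarrow>
    addm C X Y a (addm C X Y b c) = addm C X Y b (addm C X Y a c)"
  using addm_assoc[of X Y a b c] addm_assoc[of X Y b a c] addm_commute[of X Y a b] by simp

lemma cmp_zerom_right [simp]:
  assumes "X \<in> ob C" "Y \<in> ob C" "Z \<in> ob C" "g \<in> hom C Y Z"
  shows "cmp C X Y Z g (zerom C X Y) = zerom C X Z"
proof -
  have "cmp C X Y Z g (zerom C X Y) = cmp C X Y Z g (addm C X Y (zerom C X Y) (zerom C X Y))"
    using assms by simp
  also have "\<dots> = addm C X Z (cmp C X Y Z g (zerom C X Y)) (cmp C X Y Z g (zerom C X Y))"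
    using assms by (intro cmp_addm_right) auto
  finally show ?thesis
    using addm_idem_zerom[of X Z "cmp C X Y Z g (zerom C X Y)"] assms by (simp add: cmp_closed)
qed

lemma cmp_zerom_left [simp]:
  assumes "X \<in> ob C" "Y \<in> ob C" "Z \<in> ob C" "f \<in> hom C X Y"
  shows "cmp C X Y Z (zerom C Y Z) f = zerom C X Z"
proof -
  have "cmp C X Y Z (zerom C Y Z) f = cmp C X Y Z (addm C Y Z (zerom C Y Z) (zerom C Y Z)) f"
    using assms by simp
  also have "\<dots> = addm C X Z (cmp C X Y Z (zerom C Y Z) f) (cmp C X Y Z (zerom C Y Z) f)"
    using assms by (intro cmp_addm_left) auto
  finally show ?thesis
    using addm_idem_zerom[of X Z "cmp C X Y Z (zerom C Y Z) f"] assms by (simp add: cmp_closed)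
qed

lemma cmp_negm_right:
  assumes "X \<in> ob C" "Y \<in> ob C" "Z \<in> ob C" "f \<in> hom C X Y" "g \<in> hom C Y Z"
  shows "cmp C X Y Z g (negm C X Y f) = negm C X Z (cmp C X Y Z g f)"
proof (rule negm_unique)
  show "addm C X Z (cmp C X Y Z g f) (cmp C X Y Z g (negm C X Y f)) = zerom C X Z"
    using assms cmp_addm_right[of X Y Z f "negm C X Y f" g] by (simp add: negm_closed)
qed (use assms in \<open>auto intro: negm_closed\<close>)

lemma cmp_negm_left:
  assumes "X \<in> ob C" "Y \<in> ob C" "Z \<in> ob C" "f \<in> hom C X Y" "g \<in> hom C Y Z"
  shows "cmp C X Y Z (negm C Y Z g) f = negm C X Z (cmp C X Y Z g f)"
proof (rule negm_unique)
  show "addm C X Z (cmp C X Y Z g f) (cmp C X Y Z (negm C Y Z g) f) = zerom C X Z"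
    using assms cmp_addm_left[of X Y Z f g "negm C Y Z g"] by (simp add: negm_closed)
qed (use assms in \<open>auto intro: negm_closed\<close>)

section \<open>Shift and distinguished triangles\<close>

lemma sho_closed [simp, intro]: "X \<in> ob C \<Longrightarrow> sho C X \<in> ob C"
  using shift unfolding shift_ok_def by meson

lemma shm_bij:
  "X \<in> ob C \<Longrightarrow> Y \<in> ob C \<Longrightarrow> bij_betw (shm C X Y) (hom C X Y) (hom C (sho C X) (sho C Y))"
  using shift unfolding shift_ok_def by meson

lemma shm_closed [intro]:
  "X \<in> ob C \<Longrightarrow> Y \<in> ob C \<Longrightarrow> f \<in> hom C X Y \<Longrightarrow> shm C X Y f \<in> hom C (sho C X) (sho C Y)"
  using shm_bij bij_betwE by blast

lemma shm_inj:
  "X \<in> ob C \<Longrightarrow> Y \<in> ob C \<Longrightarrow> f \<in> hom C X Y \<Longrightarrow> g \<in> hom C X Y \<Longrightarrow>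
    shm C X Y f = shm C X Y g \<Longrightarrow> f = g"
  using shm_bij unfolding bij_betw_def inj_on_def by blast

lemma shm_surj:
  "X \<in> ob C \<Longrightarrow> Y \<in> ob C \<Longrightarrow> c \<in> hom C (sho C X) (sho C Y) \<Longrightarrow> \<exists>u\<in>hom C X Y. c = shm C X Y u"
  using shm_bij unfolding bij_betw_def by blast

lemma shm_idm [simp]: "X \<in> ob C \<Longrightarrow> shm C X X (idm C X) = idm C (sho C X)"
  using shift unfolding shift_ok_def by meson

lemma shm_cmp:
  "X \<in> ob C \<Longrightarrow> Y \<in> ob C \<Longrightarrow> Z \<in> ob C \<Longrightarrow> f \<in> hom C X Y \<Longrightarrow> g \<in> hom C Y Z \<Longrightarrow>
    shm C X Z (cmp C X Y Z g f) = cmp C (sho C X) (sho C Y) (sho C Z) (shm C Y Z g) (shm C X Y f)"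
  using shift unfolding shift_ok_def by meson

lemma shm_addm:
  "X \<in> ob C \<Longrightarrow> Y \<in> ob C \<Longrightarrow> f \<in> hom C X Y \<Longrightarrow> g \<in> hom C X Y \<Longrightarrow>
    shm C X Y (addm C X Y f g) = addm C (sho C X) (sho C Y) (shm C X Y f) (shm C X Y g)"
  using shift unfolding shift_ok_def by meson

lemma shift_ess_surj: "Y \<in> ob C \<Longrightarrow> \<exists>X\<in>ob C. \<exists>u. is_iso C (sho C X) Y u"
  using shift unfolding shift_ok_def by meson

lemma shm_zerom [simp]:
  assumes "X \<in> ob C" "Y \<in> ob C"
  shows "shm C X Y (zerom C X Y) = zerom C (sho C X) (sho C Y)"
proof -
  have "shm C X Y (zerom C X Y) = shm C X Y (addm C X Y (zerom C X Y) (zerom C X Y))"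
    using assms by simp
  also have "\<dots> = addm C (sho C X) (sho C Y) (shm C X Y (zerom C X Y)) (shm C X Y (zerom C X Y))"
    using assms by (intro shm_addm) auto
  finally show ?thesis
    using addm_idem_zerom[of "sho C X" "sho C Y" "shm C X Y (zerom C X Y)"] assms by auto
qed

lemma dist_is_triangle: "(X,Y,Z,f,g,h) \<in> dist C \<Longrightarrow> is_triangle C X Y Z f g h"
  using triangulated unfolding is_triangulated_def by fast

lemma distD:
  assumes "(X,Y,Z,f,g,h) \<in> dist C"
  shows "X \<in> ob C" "Y \<in> ob C" "Z \<in> ob C" "f \<in> hom C X Y" "g \<in> hom C Y Z" "h \<in> hom C Z (sho C X)"
  using dist_is_triangle[OF assms] unfolding is_triangle_def by auto

lemma dist_trivial:
  "X \<in> ob C \<Longrightarrow> is_zero_obj C Z \<Longrightarrow> (X, X, Z, idm C X, zerom C X Z, zerom C Z (sho C X)) \<in> dist C"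
  using triangulated unfolding is_triangulated_def by meson

lemma dist_cone_exists:
  "X \<in> ob C \<Longrightarrow> Y \<in> ob C \<Longrightarrow> f \<in> hom C X Y \<Longrightarrow> \<exists>Z g h. (X,Y,Z,f,g,h) \<in> dist C"
  using triangulated unfolding is_triangulated_def by meson

lemma dist_rotate_iff:
  "is_triangle C X Y Z f g h \<Longrightarrow>
    (X,Y,Z,f,g,h) \<in> dist C \<longleftrightarrow> (Y, Z, sho C X, g, h, negm C (sho C X) (sho C Y) (shm C X Y f)) \<in> dist C"
  using triangulated unfolding is_triangulated_def by meson

lemma dist_rotate:
  "(X,Y,Z,f,g,h) \<in> dist C \<Longrightarrow> (Y, Z, sho C X, g, h, negm C (sho C X) (sho C Y) (shm C X Y f)) \<in> dist C"
  using dist_rotate_iff dist_is_triangle by blast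

lemma dist_morphism_exists:
  "(X,Y,Z,f,g,h) \<in> dist C \<Longrightarrow> (X',Y',Z',f',g',h') \<in> dist C \<Longrightarrow>
    a \<in> hom C X X' \<Longrightarrow> b \<in> hom C Y Y' \<Longrightarrow> cmp C X Y Y' b f = cmp C X X' Y' f' a \<Longrightarrow>
    \<exists>c. tri_morph C X Y Z f g h X' Y' Z' f' g' h' a b c"
  using triangulated unfolding is_triangulated_def by meson

lemma octahedral:
  "(X,Y,Z',f,f2,f3) \<in> dist C \<Longrightarrow> (Y,Z,X',g,g2,g3) \<in> dist C \<Longrightarrow>
    (X,Z,Y',cmp C X Y Z g f,h2,h3) \<in> dist C \<Longrightarrow>
    \<exists>u v. (Z', Y', X', u, v, cmp C X' (sho C Y) (sho C Z') (shm C Y Z' f2) g3) \<in> dist C"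
  using triangulated unfolding is_triangulated_def by meson

lemma zero_obj_ob: "is_zero_obj C Z \<Longrightarrow> Z \<in> ob C"
  unfolding is_zero_obj_def by blast

lemma zero_obj_idm: "is_zero_obj C Z \<Longrightarrow> idm C Z = zerom C Z Z"
  unfolding is_zero_obj_def using idm_closed by blast

lemma zero_objI:
  assumes Z: "Z \<in> ob C" and id0: "idm C Z = zerom C Z Z"
  shows "is_zero_obj C Z"
proof -
  have "hom C Z X = {zerom C Z X} \<and> hom C X Z = {zerom C X Z}" if X: "X \<in> ob C" for X
  proof -
    have "u = zerom C Z X" if "u \<in> hom C Z X" for u
      using cmp_idm_right[OF Z X that] cmp_zerom_right[OF Z Z X that] id0 by simp
    moreover have "u = zerom C X Z" if "u \<in> hom C X Z" for u
      using cmp_idm_left[OF X Z that] cmp_zerom_left[OF X Z Z that] id0 by simp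
    ultimately show ?thesis
      using Z X by blast
  qed
  then show ?thesis
    unfolding is_zero_obj_def using Z by blast
qed

lemma zero_obj_shift: "is_zero_obj C Z \<Longrightarrow> is_zero_obj C (sho C Z)"
  using zero_objI zero_obj_ob zero_obj_idm by (metis shm_idm shm_zerom sho_closed)

definition zobj :: 'o where
  "zobj = (SOME Z. is_zero_obj C Z)"

lemma is_zero_zobj: "is_zero_obj C zobj"
  unfolding zobj_def using additive someI_ex unfolding is_additive_def by metis

lemma zobj_ob [simp, intro]: "zobj \<in> ob C"
  using is_zero_zobj zero_obj_ob by blast

lemma dist_cmp12_zero:
  assumes d: "(X,Y,Z,f,g,h) \<in> dist C"
  shows "cmp C X Y Z g f = zerom C X Z"
proof -
  note D = distD[OF d]
  have t: "(X, X, zobj, idm C X, zerom C X zobj, zerom C zobj (sho C X)) \<in> dist C"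
    using dist_trivial D is_zero_zobj by blast
  obtain c where "tri_morph C X X zobj (idm C X) (zerom C X zobj) (zerom C zobj (sho C X))
      X Y Z f g h (idm C X) f c"
    using dist_morphism_exists[OF t d] D by fastforce
  then have "c \<in> hom C zobj Z" "cmp C X zobj Z c (zerom C X zobj) = cmp C X Y Z g f"
    unfolding tri_morph_def using D by auto
  then show ?thesis
    using D by simp
qed

lemma dist_cmp23_zero:
  "(X,Y,Z,f,g,h) \<in> dist C \<Longrightarrow> cmp C Y Z (sho C X) h g = zerom C Y (sho C X)"
  using dist_cmp12_zero[OF dist_rotate] .

lemma dist_cmp31_zero:
  assumes d: "(X,Y,Z,f,g,h) \<in> dist C"
  shows "cmp C Z (sho C X) (sho C Y) (shm C X Y f) h = zerom C Z (sho C Y)"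
proof -
  note D = distD[OF d]
  have "cmp C Z (sho C X) (sho C Y) (negm C (sho C X) (sho C Y) (shm C X Y f)) h = zerom C Z (sho C Y)"
    using dist_cmp12_zero[OF dist_rotate[OF dist_rotate[OF d]]] .
  then show ?thesis
    using D cmp_negm_left[of Z "sho C X" "sho C Y" h "shm C X Y f"]
    by (metis cmp_closed negm_eq_zerom shm_closed sho_closed)
qed

lemma dist_trivial_left:
  assumes W: "W \<in> ob C"
  shows "(zobj, W, W, zerom C zobj W, idm C W, zerom C W (sho C zobj)) \<in> dist C"
proof -
  have "is_triangle C zobj W W (zerom C zobj W) (idm C W) (zerom C W (sho C zobj))"
    unfolding is_triangle_def using W by auto
  moreover have "(W, W, sho C zobj, idm C W, zerom C W (sho C zobj), zerom C (sho C zobj) (sho C W)) \<in> dist C"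
    using dist_trivial W zero_obj_shift is_zero_zobj by blast
  ultimately show ?thesis
    using dist_rotate_iff W by simp
qed

lemma dist_weak_kernel:
  assumes d: "(X,Y,Z,f,g,h) \<in> dist C" and W: "W \<in> ob C" and v: "v \<in> hom C W Y"
    and gv: "cmp C W Y Z g v = zerom C W Z"
  shows "\<exists>u\<in>hom C W X. cmp C W X Y f u = v"
proof -
  note D = distD[OF d]
  let ?\<Sigma>W = "sho C W"
  have "(W, zobj, ?\<Sigma>W, zerom C W zobj, zerom C zobj ?\<Sigma>W, negm C ?\<Sigma>W ?\<Sigma>W (idm C ?\<Sigma>W)) \<in> dist C"
    using dist_rotate[OF dist_trivial[OF W is_zero_zobj]] W by simp
  moreover have "cmp C W zobj Z (zerom C zobj Z) (zerom C W zobj) = cmp C W Y Z g v"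
    using gv W D by simp
  ultimately obtain c where
    "tri_morph C W zobj ?\<Sigma>W (zerom C W zobj) (zerom C zobj ?\<Sigma>W) (negm C ?\<Sigma>W ?\<Sigma>W (idm C ?\<Sigma>W))
       Y Z (sho C X) g h (negm C (sho C X) (sho C Y) (shm C X Y f)) v (zerom C zobj Z) c"
    using dist_morphism_exists[OF _ dist_rotate[OF d]] v D by blast
  then have c: "c \<in> hom C ?\<Sigma>W (sho C X)" and
    sq: "cmp C ?\<Sigma>W ?\<Sigma>W (sho C Y) (shm C W Y v) (negm C ?\<Sigma>W ?\<Sigma>W (idm C ?\<Sigma>W))
        = cmp C ?\<Sigma>W (sho C X) (sho C Y) (negm C (sho C X) (sho C Y) (shm C X Y f)) c"
    unfolding tri_morph_def by auto
  have "negm C ?\<Sigma>W (sho C Y) (shm C W Y v)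
      = negm C ?\<Sigma>W (sho C Y) (cmp C ?\<Sigma>W (sho C X) (sho C Y) (shm C X Y f) c)"
    using sq W D c v by (simp add: cmp_negm_right cmp_negm_left shm_closed)
  then have e: "shm C W Y v = cmp C ?\<Sigma>W (sho C X) (sho C Y) (shm C X Y f) c"
    using negm_inj W D c v by (meson cmp_closed shm_closed sho_closed)
  obtain u where u: "u \<in> hom C W X" "c = shm C W X u"
    using shm_surj W D c by blast
  have "shm C W Y v = shm C W Y (cmp C W X Y f u)"
    using e u W D by (simp add: shm_cmp)
  then have "v = cmp C W X Y f u"
    using shm_inj W D u v by (meson cmp_closed)
  then show ?thesis
    using u by blast
qed

lemma dist_weak_cokernel:
  assumes d: "(X,Y,Z,f,g,h) \<in> dist C" and W: "W \<in> ob C" and v: "v \<in> hom C Y W"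
    and vf: "cmp C X Y W v f = zerom C X W"
  shows "\<exists>t\<in>hom C Z W. cmp C Y Z W t g = v"
proof -
  note D = distD[OF d]
  have sq: "cmp C X Y W v f = cmp C X zobj W (zerom C zobj W) (zerom C X zobj)"
    using vf W D by simp
  obtain c where "tri_morph C X Y Z f g h zobj W W (zerom C zobj W) (idm C W)
      (zerom C W (sho C zobj)) (zerom C X zobj) v c"
    using dist_morphism_exists[OF d dist_trivial_left[OF W] _ _ sq] v D W by auto
  then have "c \<in> hom C Z W" "cmp C Y Z W c g = cmp C Y W W (idm C W) v"
    unfolding tri_morph_def by auto
  then show ?thesis
    using v W D by auto
qed

lemmas hom_closed = cmp_closed addm_closed negm_closed idm_closed zerom_closed shm_closed sho_closed

lemma iso_idm_plus_square_zero:
  assumes Z: "Z \<in> ob C" and a: "a \<in> hom C Z Z" and aa: "cmp C Z Z Z a a = zerom C Z Z"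
  shows "is_iso C Z Z (addm C Z Z (idm C Z) a)"
proof -
  let ?e = "idm C Z"
  let ?p = "addm C Z Z ?e a" and ?q = "addm C Z Z ?e (negm C Z Z a)"
  have pa: "cmp C Z Z Z ?p a = a"
    using Z a aa by (simp add: cmp_addm_left hom_closed)
  have qa: "cmp C Z Z Z ?q a = a"
    using Z a aa by (simp add: cmp_addm_left cmp_negm_left hom_closed)
  have "cmp C Z Z Z ?p ?q = addm C Z Z ?p (negm C Z Z a)"
    using Z a pa by (simp add: cmp_addm_right cmp_negm_right hom_closed)
  also have "\<dots> = ?e"
    using Z a by (simp add: addm_assoc hom_closed)
  finally have pq: "cmp C Z Z Z ?p ?q = ?e" .
  have "cmp C Z Z Z ?q ?p = addm C Z Z ?q a"
    using Z a qa by (simp add: cmp_addm_right hom_closed)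
  also have "\<dots> = ?e"
    using Z a by (simp add: addm_assoc hom_closed)
  finally have qp: "cmp C Z Z Z ?q ?p = ?e" .
  show ?thesis
    unfolding is_iso_def using pq qp Z a by (auto intro!: bexI[of _ ?q] simp: hom_closed)
qed

text \<open>If \<open>\<phi>\<close> fixes \<open>g\<close> and \<open>h\<close>, then \<open>\<phi> - 1\<close> factors both through \<open>h\<close> and through \<open>g\<close>,
  so its square factors through \<open>h \<circ> g = 0\<close>.\<close>

lemma dist_endo_iso:
  assumes d: "(X,Y,Z,f,g,h) \<in> dist C" and \<phi>: "\<phi> \<in> hom C Z Z"
    and \<phi>g: "cmp C Y Z Z \<phi> g = g" and h\<phi>: "cmp C Z Z (sho C X) h \<phi> = h"
  shows "is_iso C Z Z \<phi>"
proof -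
  note D = distD[OF d]
  define \<psi> where "\<psi> = addm C Z Z \<phi> (negm C Z Z (idm C Z))"
  have \<psi>: "\<psi> \<in> hom C Z Z"
    unfolding \<psi>_def using \<phi> D by (simp add: hom_closed)
  have "cmp C Y Z Z \<psi> g = zerom C Y Z"
    unfolding \<psi>_def using \<phi> D \<phi>g by (simp add: cmp_addm_left cmp_negm_left hom_closed)
  then obtain t where t: "t \<in> hom C (sho C X) Z" "cmp C Z (sho C X) Z t h = \<psi>"
    using dist_weak_cokernel[OF dist_rotate[OF d] _ \<psi>] D by blast
  have "cmp C Z Z (sho C X) h \<psi> = zerom C Z (sho C X)"
    unfolding \<psi>_def using \<phi> D h\<phi> by (simp add: cmp_addm_right cmp_negm_right hom_closed)
  then obtain u where u: "u \<in> hom C Z Y" "cmp C Z Y Z g u = \<psi>"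
    using dist_weak_kernel[OF dist_rotate[OF d] _ \<psi>] D by blast
  have "cmp C Z Z Z \<psi> \<psi> = cmp C Z Z Z (cmp C Z (sho C X) Z t h) (cmp C Z Y Z g u)"
    using t u by simp
  also have "\<dots> = cmp C Z (sho C X) Z t (cmp C Z Z (sho C X) h (cmp C Z Y Z g u))"
    by (rule cmp_assoc[symmetric]) (use t u D in \<open>auto intro: hom_closed\<close>)
  also have "cmp C Z Z (sho C X) h (cmp C Z Y Z g u) = cmp C Z Y (sho C X) (cmp C Y Z (sho C X) h g) u"
    using cmp_assoc[of Z Y Z "sho C X" u g h] u D by simp
  also have "\<dots> = zerom C Z (sho C X)"
    using dist_cmp23_zero[OF d] u D by simp
  finally have \<psi>\<psi>: "cmp C Z Z Z \<psi> \<psi> = zerom C Z Z"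
    using t D by simp
  have "addm C Z Z (idm C Z) \<psi> = addm C Z Z \<phi> (addm C Z Z (negm C Z Z (idm C Z)) (idm C Z))"
    unfolding \<psi>_def using \<phi> D by (simp add: addm_left_commute hom_closed)
  then have "\<phi> = addm C Z Z (idm C Z) \<psi>"
    using \<phi> D by simp
  then show ?thesis
    using iso_idm_plus_square_zero[OF _ \<psi> \<psi>\<psi>] D by simp
qed

lemma tri_morph_comp_iso:
  assumes d: "(X1,X2,X3,f,g,h) \<in> dist C" and dF: "(F1,F2,F3,w,G,H) \<in> dist C"
    and c: "tri_morph C X1 X2 X3 f g h F1 F2 F3 w G H j1 j2 c"
    and c': "tri_morph C F1 F2 F3 w G H X1 X2 X3 f g h r1 r2 c'"
    and r1j1: "cmp C X1 F1 X1 r1 j1 = idm C X1" and r2j2: "cmp C X2 F2 X2 r2 j2 = idm C X2"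
  shows "is_iso C X3 X3 (cmp C X3 F3 X3 c' c)"
proof -
  note D = distD[OF d] and DF = distD[OF dF]
  have j1: "j1 \<in> hom C X1 F1" and j2: "j2 \<in> hom C X2 F2" and r1: "r1 \<in> hom C F1 X1"
    and c1: "c \<in> hom C X3 F3" and c2: "cmp C X2 X3 F3 c g = cmp C X2 F2 F3 G j2"
    and c3: "cmp C X3 (sho C X1) (sho C F1) (shm C X1 F1 j1) h = cmp C X3 F3 (sho C F1) H c"
    and c'1: "c' \<in> hom C F3 X3" and c'2: "cmp C F2 F3 X3 c' G = cmp C F2 X2 X3 g r2"
    and c'3: "cmp C F3 (sho C F1) (sho C X1) (shm C F1 X1 r1) H = cmp C F3 X3 (sho C X1) h c'"
    using c c' unfolding tri_morph_def by auto
  define \<phi> where "\<phi> = cmp C X3 F3 X3 c' c"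
  have \<phi>: "\<phi> \<in> hom C X3 X3"
    unfolding \<phi>_def using c1 c'1 D DF by (auto intro: hom_closed)
  have "cmp C X2 X3 X3 \<phi> g = cmp C X2 F3 X3 c' (cmp C X2 X3 F3 c g)"
    unfolding \<phi>_def by (rule cmp_assoc[symmetric]) (use c1 c'1 D DF in \<open>auto intro: hom_closed\<close>)
  also have "\<dots> = cmp C X2 F2 X3 (cmp C F2 F3 X3 c' G) j2"
    unfolding c2 by (rule cmp_assoc) (use c'1 D DF j2 in \<open>auto intro: hom_closed\<close>)
  also have "\<dots> = cmp C X2 X2 X3 g (cmp C X2 F2 X2 r2 j2)"
    unfolding c'2 using c' unfolding tri_morph_def
    by (intro cmp_assoc[symmetric]) (use D DF j2 in \<open>auto intro: hom_closed\<close>)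
  finally have \<phi>g: "cmp C X2 X3 X3 \<phi> g = g"
    using r2j2 D by simp
  have "cmp C X3 X3 (sho C X1) h \<phi> = cmp C X3 F3 (sho C X1) (cmp C F3 X3 (sho C X1) h c') c"
    unfolding \<phi>_def by (rule cmp_assoc) (use c1 c'1 D DF in \<open>auto intro: hom_closed\<close>)
  also have "\<dots> = cmp C X3 (sho C F1) (sho C X1) (shm C F1 X1 r1) (cmp C X3 F3 (sho C F1) H c)"
    unfolding c'3[symmetric] by (rule cmp_assoc[symmetric]) (use c1 r1 D DF in \<open>auto intro: hom_closed\<close>)
  also have "\<dots> = cmp C X3 (sho C X1) (sho C X1)
      (cmp C (sho C X1) (sho C F1) (sho C X1) (shm C F1 X1 r1) (shm C X1 F1 j1)) h"
    unfolding c3[symmetric] by (rule cmp_assoc) (use r1 j1 D DF in \<open>auto intro: hom_closed\<close>)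
  also have "cmp C (sho C X1) (sho C F1) (sho C X1) (shm C F1 X1 r1) (shm C X1 F1 j1) = idm C (sho C X1)"
    using shm_cmp[of X1 F1 X1 j1 r1, symmetric] r1j1 r1 j1 D DF by simp
  finally have h\<phi>: "cmp C X3 X3 (sho C X1) h \<phi> = h"
    using D by simp
  show ?thesis
    using dist_endo_iso[OF d \<phi> \<phi>g h\<phi>] unfolding \<phi>_def .
qed

section \<open>Retracts\<close>

definition retract :: "'o \<Rightarrow> 'o \<Rightarrow> bool" where
  "retract A B \<longleftrightarrow> (\<exists>i\<in>hom C A B. \<exists>p\<in>hom C B A. cmp C A B A p i = idm C A)"

lemma retract_refl: "A \<in> ob C \<Longrightarrow> retract A A"
  unfolding retract_def by (intro bexI[of _ "idm C A"]) auto

lemma retract_trans: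
  assumes A: "A \<in> ob C" and B: "B \<in> ob C" and K: "K \<in> ob C"
    and AB: "retract A B" and BK: "retract B K"
  shows "retract A K"
proof -
  obtain i p where i: "i \<in> hom C A B" "p \<in> hom C B A" "cmp C A B A p i = idm C A"
    using AB unfolding retract_def by blast
  obtain j q where j: "j \<in> hom C B K" "q \<in> hom C K B" "cmp C B K B q j = idm C B"
    using BK unfolding retract_def by blast
  have "cmp C A K A (cmp C K B A p q) (cmp C A B K j i) = cmp C A B A p (cmp C A K B q (cmp C A B K j i))"
    by (rule cmp_assoc[symmetric]) (use A B K i j in \<open>auto intro: cmp_closed\<close>)
  also have "cmp C A K B q (cmp C A B K j i) = i"
    using cmp_assoc[of A B K B i j q] A B K i j by simp
  finally have "cmp C A K A (cmp C K B A p q) (cmp C A B K j i) = idm C A"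
    using i by simp
  then show ?thesis
    unfolding retract_def using A B K i j by (meson cmp_closed)
qed

lemma iso_retract:
  assumes "is_iso C X Y u"
  shows "retract X Y" "retract Y X"
  using assms unfolding is_iso_def retract_def by blast+

lemma summand_retract: "is_summand C A B \<Longrightarrow> retract A B"
  unfolding is_summand_def is_biproduct_def retract_def by blast

lemma retract_shift:
  assumes A: "A \<in> ob C" and B: "B \<in> ob C"
  shows "retract (sho C A) (sho C B) \<longleftrightarrow> retract A B"
proof
  assume "retract (sho C A) (sho C B)"
  then obtain i' p' where i': "i' \<in> hom C (sho C A) (sho C B)" "p' \<in> hom C (sho C B) (sho C A)"
    "cmp C (sho C A) (sho C B) (sho C A) p' i' = idm C (sho C A)"
    unfolding retract_def by blast
  obtain i where i: "i \<in> hom C A B" "i' = shm C A B i"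
    using shm_surj A B i' by blast
  obtain p where p: "p \<in> hom C B A" "p' = shm C B A p"
    using shm_surj A B i' by blast
  have "shm C A A (cmp C A B A p i) = shm C A A (idm C A)"
    using shm_cmp[of A B A i p] i p i' A B by simp
  then have "cmp C A B A p i = idm C A"
    using shm_inj A B i p by (meson cmp_closed idm_closed)
  then show "retract A B"
    unfolding retract_def using i p by blast
next
  assume "retract A B"
  then obtain i p where i: "i \<in> hom C A B" "p \<in> hom C B A" "cmp C A B A p i = idm C A"
    unfolding retract_def by blast
  have "cmp C (sho C A) (sho C B) (sho C A) (shm C B A p) (shm C A B i) = idm C (sho C A)"
    using shm_cmp[of A B A i p, symmetric] i A B by simp
  then show "retract (sho C A) (sho C B)"
    unfolding retract_def using i A B by (meson shm_closed)
qed

lemma dist_split_mono_connecting_zero: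
  assumes d: "(A,B,K,i,g,h) \<in> dist C" and p: "p \<in> hom C B A" and pi: "cmp C A B A p i = idm C A"
  shows "h = zerom C K (sho C A)"
proof -
  note D = distD[OF d]
  have "cmp C K (sho C B) (sho C A) (shm C B A p) (cmp C K (sho C A) (sho C B) (shm C A B i) h) = h"
    using cmp_assoc[of K "sho C A" "sho C B" "sho C A" h "shm C A B i" "shm C B A p"] D p pi
    by (simp add: hom_closed shm_cmp[symmetric])
  then show ?thesis
    using dist_cmp31_zero[OF d] D p by (simp add: hom_closed)
qed

lemma dist_split_mono_section:
  assumes d: "(A,B,K,i,g,h) \<in> dist C" and p: "p \<in> hom C B A" and pi: "cmp C A B A p i = idm C A"
  shows "\<exists>s\<in>hom C K B. cmp C K B K g s = idm C K \<and> cmp C K B A p s = zerom C K A"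
proof -
  note D = distD[OF d]
  have "cmp C K K (sho C A) h (idm C K) = zerom C K (sho C A)"
    using dist_split_mono_connecting_zero[OF assms] D by simp
  then obtain s0 where s0: "s0 \<in> hom C K B" "cmp C K B K g s0 = idm C K"
    using dist_weak_kernel[OF dist_rotate[OF d] _ idm_closed] D by blast
  define s where "s = addm C K B s0 (negm C K B (cmp C K A B i (cmp C K B A p s0)))"
  have "cmp C K B K g (cmp C K A B i (cmp C K B A p s0)) = zerom C K K"
    using cmp_assoc[of K A B K "cmp C K B A p s0" i g] dist_cmp12_zero[OF d] s0 p D
    by (simp add: hom_closed)
  then have "cmp C K B K g s = idm C K"
    unfolding s_def using s0 D p by (simp add: cmp_addm_right cmp_negm_right hom_closed)
  moreover have "cmp C K B A p (cmp C K A B i (cmp C K B A p s0)) = cmp C K B A p s0"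
    using cmp_assoc[of K A B A "cmp C K B A p s0" i p] pi D p s0 by (simp add: hom_closed)
  then have "cmp C K B A p s = zerom C K A"
    unfolding s_def using s0 D p by (simp add: cmp_addm_right cmp_negm_right hom_closed)
  moreover have "s \<in> hom C K B"
    unfolding s_def using s0 D p by (simp add: hom_closed)
  ultimately show ?thesis
    by blast
qed

lemma dist_split_mono_biproduct:
  assumes d: "(A,B,K,i,g,h) \<in> dist C" and p: "p \<in> hom C B A" and pi: "cmp C A B A p i = idm C A"
  shows "\<exists>s. is_biproduct C A K B i s p g"
proof -
  note D = distD[OF d]
  obtain s where s: "s \<in> hom C K B" and gs: "cmp C K B K g s = idm C K"
    and ps: "cmp C K B A p s = zerom C K A"
    using dist_split_mono_section[OF assms] by blast
  have gi: "cmp C A B K g i = zerom C A K"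
    using dist_cmp12_zero[OF d] .
  define E where "E = addm C B B (idm C B) (negm C B B (addm C B B (cmp C B A B i p) (cmp C B K B s g)))"
  have E: "E \<in> hom C B B"
    unfolding E_def using s D p by (simp add: hom_closed)
  have "cmp C A B B (cmp C B A B i p) i = i"
    using cmp_assoc[of A B A B i p i] pi D p by simp
  moreover have "cmp C A B B (cmp C B K B s g) i = zerom C A B"
    using cmp_assoc[of A B K B i g s] gi D s by simp
  ultimately have "cmp C A B B E i = zerom C A B"
    unfolding E_def using D p s by (simp add: cmp_addm_left cmp_negm_left hom_closed)
  then obtain t where t: "t \<in> hom C K B" "cmp C B K B t g = E"
    using dist_weak_cokernel[OF d _ E] D by blast
  have "cmp C K B B (cmp C B A B i p) s = zerom C K B"
    using cmp_assoc[of K B A B s p i] ps D p s by simp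
  moreover have "cmp C K B B (cmp C B K B s g) s = s"
    using cmp_assoc[of K B K B s g s] gs D s by simp
  ultimately have Es: "cmp C K B B E s = zerom C K B"
    unfolding E_def using D p s by (simp add: cmp_addm_left cmp_negm_left hom_closed)
  have "t = cmp C K K B t (cmp C K B K g s)"
    using gs t D by simp
  also have "\<dots> = cmp C K B B E s"
    using cmp_assoc[of K B K B s g t] t D s by simp
  finally have "E = zerom C B B"
    using Es t D by simp
  then have "addm C B B (cmp C B A B i p) (cmp C B K B s g) = idm C B"
    unfolding E_def using D p s by (metis addm_closed cmp_closed idm_closed negm_closed negm_negm negm_unique)
  then have "is_biproduct C A K B i s p g"
    unfolding is_biproduct_def using D p pi s gs ps gi by auto
  then show ?thesis
    by blast
qed

lemma retract_summand:
  assumes A: "A \<in> ob C" and B: "B \<in> ob C" and AB: "retract A B"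
  shows "is_summand C A B"
proof -
  obtain i p where i: "i \<in> hom C A B" and p: "p \<in> hom C B A" and pi: "cmp C A B A p i = idm C A"
    using AB unfolding retract_def by blast
  obtain K g h where d: "(A,B,K,i,g,h) \<in> dist C"
    using dist_cone_exists A B i by blast
  show ?thesis
    using dist_split_mono_biproduct[OF d p pi] unfolding is_summand_def by blast
qed

lemma biproduct_cone_iso:
  assumes bp: "is_biproduct C X W F i1 i2 p1 p2" and di: "(W, F, K, i2, g, h) \<in> dist C"
  shows "is_iso C X K (cmp C X F K g i1)"
proof -
  have X: "X \<in> ob C" and W: "W \<in> ob C" and F: "F \<in> ob C" and K: "K \<in> ob C"
    and i1: "i1 \<in> hom C X F" and i2: "i2 \<in> hom C W F" and p1: "p1 \<in> hom C F X"
    and p2: "p2 \<in> hom C F W" and g: "g \<in> hom C F K"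
    and p1i1: "cmp C X F X p1 i1 = idm C X" and p2i2: "cmp C W F W p2 i2 = idm C W"
    and sum: "addm C F F (cmp C F X F i1 p1) (cmp C F W F i2 p2) = idm C F"
    using bp distD[OF di] unfolding is_biproduct_def by auto
  obtain s where "is_biproduct C W K F i2 s p2 g"
    using dist_split_mono_biproduct[OF di p2 p2i2] by blast
  then have s: "s \<in> hom C K F" "cmp C K F K g s = idm C K"
     "addm C F F (cmp C F W F i2 p2) (cmp C F K F s g) = idm C F"
    unfolding is_biproduct_def by auto
  have "addm C F F (cmp C F W F i2 p2) (cmp C F K F s g) = addm C F F (cmp C F W F i2 p2) (cmp C F X F i1 p1)"
    using s(3) sum addm_commute[of F F "cmp C F X F i1 p1" "cmp C F W F i2 p2"] F X W i1 i2 p1 p2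
    by (simp add: hom_closed)
  then have sg: "cmp C F K F s g = cmp C F X F i1 p1"
    using addm_left_cancel F X W K i1 i2 p1 p2 s g by (meson cmp_closed)
  have "cmp C X K F s (cmp C X F K g i1) = cmp C X F F (cmp C F K F s g) i1"
    using cmp_assoc[of X F K F i1 g s] X F K i1 g s by simp
  also have "\<dots> = cmp C X X F i1 (cmp C X F X p1 i1)"
    using sg cmp_assoc[of X F X F i1 p1 i1] X F i1 p1 by simp
  finally have sgi: "cmp C X K F s (cmp C X F K g i1) = i1"
    using p1i1 X F i1 by simp
  have "cmp C X K X (cmp C K F X p1 s) (cmp C X F K g i1) = cmp C X F X p1 (cmp C X K F s (cmp C X F K g i1))"
    by (rule cmp_assoc[symmetric]) (use X F K i1 g s p1 in \<open>auto intro: cmp_closed\<close>)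
  then have left_inv: "cmp C X K X (cmp C K F X p1 s) (cmp C X F K g i1) = idm C X"
    using sgi p1i1 by simp
  have "cmp C K X F i1 (cmp C K F X p1 s) = cmp C K F F (cmp C F X F i1 p1) s"
    using cmp_assoc[of K F X F s p1 i1] K F X s p1 i1 by simp
  also have "\<dots> = cmp C K K F s (cmp C K F K g s)"
    using sg cmp_assoc[of K F K F s g s] K F s g by simp
  finally have ips: "cmp C K X F i1 (cmp C K F X p1 s) = s"
    using s K F by simp
  have "cmp C K X K (cmp C X F K g i1) (cmp C K F X p1 s) = cmp C K F K g (cmp C K X F i1 (cmp C K F X p1 s))"
    by (rule cmp_assoc[symmetric]) (use X F K i1 g s p1 in \<open>auto intro: cmp_closed\<close>)
  then have right_inv: "cmp C K X K (cmp C X F K g i1) (cmp C K F X p1 s) = idm C K"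
    using ips s by simp
  show ?thesis
    unfolding is_iso_def using left_inv right_inv X F K i1 g s p1 by (meson cmp_closed)
qed

lemma dist_retract_cone:
  assumes d: "(X1,X2,X3,f,g,h) \<in> dist C"
    and j1: "j1 \<in> hom C X1 F1" "r1 \<in> hom C F1 X1" "cmp C X1 F1 X1 r1 j1 = idm C X1"
    and j2: "j2 \<in> hom C X2 F2" "r2 \<in> hom C F2 X2" "cmp C X2 F2 X2 r2 j2 = idm C X2"
    and dF: "(F1, F2, F3, cmp C F1 X2 F2 j2 (cmp C F1 X1 X2 f r1), G, H) \<in> dist C"
  shows "retract X3 F3"
proof -
  note D = distD[OF d] and DF = distD[OF dF]
  let ?w = "cmp C F1 X2 F2 j2 (cmp C F1 X1 X2 f r1)"
  have "cmp C X1 F1 F2 ?w j1 = cmp C X1 X2 F2 j2 (cmp C X1 F1 X2 (cmp C F1 X1 X2 f r1) j1)"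
    by (rule cmp_assoc[symmetric]) (use j1 j2 D DF in \<open>auto intro: hom_closed\<close>)
  also have "cmp C X1 F1 X2 (cmp C F1 X1 X2 f r1) j1 = cmp C X1 X1 X2 f (cmp C X1 F1 X1 r1 j1)"
    by (rule cmp_assoc[symmetric]) (use j1 D DF in \<open>auto intro: hom_closed\<close>)
  finally have "cmp C X1 X2 F2 j2 f = cmp C X1 F1 F2 ?w j1"
    using j1 D by simp
  then obtain c where c: "tri_morph C X1 X2 X3 f g h F1 F2 F3 ?w G H j1 j2 c"
    using dist_morphism_exists[OF d dF j1(1) j2(1)] by blast
  have "cmp C F1 F2 X2 r2 ?w = cmp C F1 X2 X2 (cmp C X2 F2 X2 r2 j2) (cmp C F1 X1 X2 f r1)"
    by (rule cmp_assoc) (use j1 j2 D DF in \<open>auto intro: hom_closed\<close>)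
  then have "cmp C F1 F2 X2 r2 ?w = cmp C F1 X1 X2 f r1"
    using j1 j2 D DF by (simp add: hom_closed)
  then obtain c' where c': "tri_morph C F1 F2 F3 ?w G H X1 X2 X3 f g h r1 r2 c'"
    using dist_morphism_exists[OF dF d j1(2) j2(2)] by blast
  have c1: "c \<in> hom C X3 F3" and c'1: "c' \<in> hom C F3 X3"
    using c c' unfolding tri_morph_def by auto
  obtain \<psi> where "\<psi> \<in> hom C X3 X3" "cmp C X3 X3 X3 \<psi> (cmp C X3 F3 X3 c' c) = idm C X3"
    using tri_morph_comp_iso[OF d dF c c' j1(3) j2(3)] unfolding is_iso_def by blast
  moreover have "cmp C X3 F3 X3 (cmp C F3 X3 X3 \<psi> c') c = cmp C X3 X3 X3 \<psi> (cmp C X3 F3 X3 c' c)"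
    if "\<psi> \<in> hom C X3 X3" for \<psi>
    by (rule cmp_assoc[symmetric]) (use c1 c'1 D DF that in \<open>auto intro: hom_closed\<close>)
  ultimately show ?thesis
    unfolding retract_def using c1 c'1 D DF by (metis cmp_closed)
qed

section \<open>Thick subcategories\<close>

lemma thick_subset: "thick C S \<Longrightarrow> S \<subseteq> ob C"
  unfolding thick_def by blast

lemma thick_nonempty: "thick C S \<Longrightarrow> S \<noteq> {}"
  unfolding thick_def by blast

lemma thick_shift_iff: "thick C S \<Longrightarrow> X \<in> ob C \<Longrightarrow> sho C X \<in> S \<longleftrightarrow> X \<in> S"
  unfolding thick_def by blast

lemma thick_iso_closed: "thick C S \<Longrightarrow> X \<in> ob C \<Longrightarrow> Y \<in> ob C \<Longrightarrow> is_iso C X Y u \<Longrightarrow> X \<in> S \<Longrightarrow> Y \<in> S"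
  unfolding thick_def by blast

lemma thick_summand_closed: "thick C S \<Longrightarrow> X \<in> ob C \<Longrightarrow> Y \<in> S \<Longrightarrow> is_summand C X Y \<Longrightarrow> X \<in> S"
  unfolding thick_def by blast

lemma thick_dist:
  assumes S: "thick C S" and d: "(X,Y,Z,f,g,h) \<in> dist C"
  shows "X \<in> S \<Longrightarrow> Y \<in> S \<Longrightarrow> Z \<in> S" "Y \<in> S \<Longrightarrow> Z \<in> S \<Longrightarrow> X \<in> S" "Z \<in> S \<Longrightarrow> X \<in> S \<Longrightarrow> Y \<in> S"
proof -
  have "\<forall>(X,Y,Z,f,g,h)\<in>dist C. (X \<in> S \<longrightarrow> Y \<in> S \<longrightarrow> Z \<in> S) \<and>
      (Y \<in> S \<longrightarrow> Z \<in> S \<longrightarrow> X \<in> S) \<and> (Z \<in> S \<longrightarrow> X \<in> S \<longrightarrow> Y \<in> S)"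
    using S unfolding thick_def by meson
  then show "X \<in> S \<Longrightarrow> Y \<in> S \<Longrightarrow> Z \<in> S" "Y \<in> S \<Longrightarrow> Z \<in> S \<Longrightarrow> X \<in> S" "Z \<in> S \<Longrightarrow> X \<in> S \<Longrightarrow> Y \<in> S"
    using d by fastforce+
qed

lemma thickI:
  assumes "S \<subseteq> ob C" "S \<noteq> {}"
    and "\<And>X. X \<in> ob C \<Longrightarrow> X \<in> S \<longleftrightarrow> sho C X \<in> S"
    and "\<And>X Y u. X \<in> ob C \<Longrightarrow> Y \<in> ob C \<Longrightarrow> is_iso C X Y u \<Longrightarrow> X \<in> S \<Longrightarrow> Y \<in> S"
    and "\<And>X Y Z f g h. (X,Y,Z,f,g,h) \<in> dist C \<Longrightarrow> X \<in> S \<Longrightarrow> Y \<in> S \<Longrightarrow> Z \<in> S"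
    and "\<And>X Y Z f g h. (X,Y,Z,f,g,h) \<in> dist C \<Longrightarrow> Y \<in> S \<Longrightarrow> Z \<in> S \<Longrightarrow> X \<in> S"
    and "\<And>X Y Z f g h. (X,Y,Z,f,g,h) \<in> dist C \<Longrightarrow> Z \<in> S \<Longrightarrow> X \<in> S \<Longrightarrow> Y \<in> S"
    and "\<And>X Y. X \<in> ob C \<Longrightarrow> Y \<in> S \<Longrightarrow> is_summand C X Y \<Longrightarrow> X \<in> S"
  shows "thick C S"
  unfolding thick_def
proof (intro conjI)
  show "\<forall>(X,Y,Z,f,g,h)\<in>dist C. (X \<in> S \<longrightarrow> Y \<in> S \<longrightarrow> Z \<in> S) \<and>
      (Y \<in> S \<longrightarrow> Z \<in> S \<longrightarrow> X \<in> S) \<and> (Z \<in> S \<longrightarrow> X \<in> S \<longrightarrow> Y \<in> S)"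
    using assms(5-7) by blast
qed (use assms(1-4,8) in blast)+

lemma thick_zero_obj:
  assumes S: "thick C S" and Z: "is_zero_obj C Z"
  shows "Z \<in> S"
proof -
  obtain X where X: "X \<in> S"
    using thick_nonempty[OF S] by blast
  then have "X \<in> ob C"
    using thick_subset[OF S] by blast
  then show ?thesis
    using thick_dist(1)[OF S dist_trivial[OF _ Z]] X by blast
qed

lemma thick_retract_closed: "thick C S \<Longrightarrow> A \<in> ob C \<Longrightarrow> B \<in> S \<Longrightarrow> retract A B \<Longrightarrow> A \<in> S"
  using thick_summand_closed retract_summand thick_subset by blast

lemma thick_ob: "thick C (ob C)"
proof (rule thickI)
  show "ob C \<noteq> {}"
    using zobj_ob by blast
qed (use distD in blast)+

lemma thick_Inter:
  assumes ne: "\<SS> \<noteq> {}" and th: "\<And>S. S \<in> \<SS> \<Longrightarrow> thick C S"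
  shows "thick C (\<Inter>\<SS>)"
proof (rule thickI)
  show "\<Inter>\<SS> \<subseteq> ob C"
    using ne th thick_subset by blast
  show "\<Inter>\<SS> \<noteq> {}"
    using th thick_zero_obj[OF _ is_zero_zobj] by blast
  show "X \<in> ob C \<Longrightarrow> X \<in> \<Inter>\<SS> \<longleftrightarrow> sho C X \<in> \<Inter>\<SS>" for X
    using th thick_shift_iff by blast
  show "X \<in> ob C \<Longrightarrow> Y \<in> ob C \<Longrightarrow> is_iso C X Y u \<Longrightarrow> X \<in> \<Inter>\<SS> \<Longrightarrow> Y \<in> \<Inter>\<SS>" for X Y u
    using th thick_iso_closed by blast
  show "X \<in> ob C \<Longrightarrow> Y \<in> \<Inter>\<SS> \<Longrightarrow> is_summand C X Y \<Longrightarrow> X \<in> \<Inter>\<SS>" for X Y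
    using th thick_summand_closed by blast
  show "Z \<in> \<Inter>\<SS>" if "(X,Y,Z,f,g,h) \<in> dist C" "X \<in> \<Inter>\<SS>" "Y \<in> \<Inter>\<SS>" for X Y Z f g h
    using thick_dist(1)[OF th that(1)] that(2,3) by blast
  show "X \<in> \<Inter>\<SS>" if "(X,Y,Z,f,g,h) \<in> dist C" "Y \<in> \<Inter>\<SS>" "Z \<in> \<Inter>\<SS>" for X Y Z f g h
    using thick_dist(2)[OF th that(1)] that(2,3) by blast
  show "Y \<in> \<Inter>\<SS>" if "(X,Y,Z,f,g,h) \<in> dist C" "Z \<in> \<Inter>\<SS>" "X \<in> \<Inter>\<SS>" for X Y Z f g h
    using thick_dist(3)[OF th that(1)] that(2,3) by blast
qed

lemma thick_join:
  assumes "A \<union> B \<subseteq> ob C"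
  shows "thick C (thick_join C A B)" and "A \<union> B \<subseteq> thick_join C A B"
    and "\<And>S. thick C S \<Longrightarrow> A \<union> B \<subseteq> S \<Longrightarrow> thick_join C A B \<subseteq> S"
proof -
  show "thick C (thick_join C A B)"
    unfolding thick_join_def by (rule thick_Inter) (use assms thick_ob in auto)
qed (auto simp: thick_join_def)

text \<open>With \<open>Cp\<close> the cone of \<open>p\<close>, the octahedra for \<open>i \<circ> p\<close> and for \<open>p \<circ> i = 1\<close> give distinguished
  triangles \<open>Cp \<rightarrow> K \<rightarrow> Ci \<rightarrow> \<Sigma>Cp\<close>, whose last map vanishes, and \<open>Ci \<rightarrow> 0 \<rightarrow> Cp \<rightarrow> \<Sigma>Ci\<close>.\<close>

lemma dist_cone_split_idempotent:
  assumes i: "i \<in> hom C W F" and p: "p \<in> hom C F W" and pi: "cmp C W F W p i = idm C W"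
    and di: "(W, F, Ci, i, g, h) \<in> dist C" and dK: "(F, F, K, cmp C F W F i p, g', h') \<in> dist C"
  shows "retract Ci K" and "\<And>S. thick C S \<Longrightarrow> Ci \<in> S \<Longrightarrow> K \<in> S"
proof -
  have W: "W \<in> ob C" and F: "F \<in> ob C" and K: "K \<in> ob C" and Ci: "Ci \<in> ob C"
    and h: "h \<in> hom C Ci (sho C W)"
    using distD[OF di] distD[OF dK] by auto
  obtain Cp f2 f3 where dp: "(F, W, Cp, p, f2, f3) \<in> dist C"
    using dist_cone_exists F W p by blast
  have Cp: "Cp \<in> ob C" and f2: "f2 \<in> hom C W Cp"
    using distD[OF dp] by auto
  obtain u v where "(Cp, K, Ci, u, v, cmp C Ci (sho C W) (sho C Cp) (shm C W Cp f2) h) \<in> dist C"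
    using octahedral[OF dp di dK] by blast
  moreover have "f2 = zerom C W Cp"
  proof -
    have "f2 = cmp C W W Cp f2 (cmp C W F W p i)"
      using pi W Cp f2 by simp
    also have "\<dots> = cmp C W F Cp (cmp C F W Cp f2 p) i"
      using cmp_assoc[of W F W Cp i p f2] W F Cp f2 p i by simp
    finally show ?thesis
      using dist_cmp12_zero[OF dp] W F Cp i by simp
  qed
  ultimately have dC: "(Cp, K, Ci, u, v, zerom C Ci (sho C Cp)) \<in> dist C"
    using W Cp Ci h by simp
  have "cmp C Ci Ci (sho C Cp) (zerom C Ci (sho C Cp)) (idm C Ci) = zerom C Ci (sho C Cp)"
    using Ci Cp by simp
  then obtain s where "s \<in> hom C Ci K" "cmp C Ci K Ci v s = idm C Ci"
    using dist_weak_kernel[OF dist_rotate[OF dC] Ci idm_closed[OF Ci]] by blast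
  then show "retract Ci K"
    unfolding retract_def using distD[OF dC] by blast
  have "(W, W, zobj, cmp C W F W p i, zerom C W zobj, zerom C zobj (sho C W)) \<in> dist C"
    using dist_trivial[OF W is_zero_zobj] pi by simp
  then obtain u' v' where dCz: "(Ci, zobj, Cp, u', v', cmp C Cp (sho C F) (sho C Ci) (shm C F Ci g) f3) \<in> dist C"
    using octahedral[OF di dp] by blast
  fix S assume S: "thick C S" and "Ci \<in> S"
  moreover have "Cp \<in> S"
    using thick_dist(1)[OF S dCz] thick_zero_obj[OF S is_zero_zobj] \<open>Ci \<in> S\<close> by blast
  ultimately show "K \<in> S"
    using thick_dist(3)[OF S dC] by blast
qed

end

section \<open>Exact functors\<close>

locale exact_fun = src: triangulated_cat T + tgt: triangulated_cat T'
  for T :: "('o, 'm, 'z) tricat_scheme" and T' :: "('p, 'n, 'y) tricat_scheme" +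
  fixes fo :: "'o \<Rightarrow> 'p" and fm :: "'o \<Rightarrow> 'o \<Rightarrow> 'm \<Rightarrow> 'n" and phi :: "'o \<Rightarrow> 'n"
  assumes exact: "exact_functor T T' fo fm phi"
begin

lemma fo_closed [simp, intro]: "X \<in> ob T \<Longrightarrow> fo X \<in> ob T'"
  using exact unfolding exact_functor_def by meson

lemma fm_closed [intro]: "X \<in> ob T \<Longrightarrow> Y \<in> ob T \<Longrightarrow> f \<in> hom T X Y \<Longrightarrow> fm X Y f \<in> hom T' (fo X) (fo Y)"
  using exact unfolding exact_functor_def by meson

lemma fm_idm [simp]: "X \<in> ob T \<Longrightarrow> fm X X (idm T X) = idm T' (fo X)"
  using exact unfolding exact_functor_def by meson

lemma fm_cmp:
  "X \<in> ob T \<Longrightarrow> Y \<in> ob T \<Longrightarrow> Z \<in> ob T \<Longrightarrow> f \<in> hom T X Y \<Longrightarrow> g \<in> hom T Y Z \<Longrightarrow>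
    fm X Z (cmp T X Y Z g f) = cmp T' (fo X) (fo Y) (fo Z) (fm Y Z g) (fm X Y f)"
  using exact unfolding exact_functor_def by meson

lemma fm_addm:
  "X \<in> ob T \<Longrightarrow> Y \<in> ob T \<Longrightarrow> f \<in> hom T X Y \<Longrightarrow> g \<in> hom T X Y \<Longrightarrow>
    fm X Y (addm T X Y f g) = addm T' (fo X) (fo Y) (fm X Y f) (fm X Y g)"
  using exact unfolding exact_functor_def by meson

lemma phi_iso: "X \<in> ob T \<Longrightarrow> is_iso T' (fo (sho T X)) (sho T' (fo X)) (phi X)"
  using exact unfolding exact_functor_def by meson

lemma fm_dist:
  "(X,Y,Z,f,g,h) \<in> dist T \<Longrightarrow>
    (fo X, fo Y, fo Z, fm X Y f, fm Y Z g,
     cmp T' (fo Z) (fo (sho T X)) (sho T' (fo X)) (phi X) (fm Z (sho T X) h)) \<in> dist T'"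
  using exact unfolding exact_functor_def by fast

lemma fm_zerom [simp]:
  assumes "X \<in> ob T" "Y \<in> ob T"
  shows "fm X Y (zerom T X Y) = zerom T' (fo X) (fo Y)"
proof -
  have "fm X Y (zerom T X Y) = addm T' (fo X) (fo Y) (fm X Y (zerom T X Y)) (fm X Y (zerom T X Y))"
    using fm_addm[of X Y "zerom T X Y" "zerom T X Y"] assms by simp
  then show ?thesis
    using tgt.addm_idem_zerom assms by (metis fm_closed fo_closed src.zerom_closed)
qed

lemma fo_zero_obj: "is_zero_obj T Z \<Longrightarrow> is_zero_obj T' (fo Z)"
  using tgt.zero_objI src.zero_obj_idm src.zero_obj_ob by (metis fm_idm fm_zerom fo_closed)

lemma fm_retract: "A \<in> ob T \<Longrightarrow> B \<in> ob T \<Longrightarrow> src.retract A B \<Longrightarrow> tgt.retract (fo A) (fo B)"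
  unfolding src.retract_def tgt.retract_def by (metis fm_closed fm_cmp fm_idm)

lemma preim_thick:
  assumes Y: "thick T' Y"
  shows "thick T (preim T fo Y)"
proof (rule src.thickI)
  show "preim T fo Y \<subseteq> ob T"
    unfolding preim_def by blast
  show "preim T fo Y \<noteq> {}"
    using tgt.thick_zero_obj[OF Y fo_zero_obj[OF src.is_zero_zobj]] unfolding preim_def by blast
  show "X \<in> preim T fo Y \<longleftrightarrow> sho T X \<in> preim T fo Y" if X: "X \<in> ob T" for X
  proof -
    have "X \<in> preim T fo Y \<longleftrightarrow> sho T' (fo X) \<in> Y"
      unfolding preim_def using tgt.thick_shift_iff[OF Y] X by auto
    also have "\<dots> \<longleftrightarrow> fo (sho T X) \<in> Y"
      using tgt.thick_retract_closed[OF Y] tgt.iso_retract[OF phi_iso[OF X]] X by auto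
    finally show ?thesis
      unfolding preim_def using X by auto
  qed
  show "X \<in> ob T \<Longrightarrow> Z \<in> ob T \<Longrightarrow> is_iso T X Z u \<Longrightarrow> X \<in> preim T fo Y \<Longrightarrow> Z \<in> preim T fo Y" for X Z u
    unfolding preim_def using tgt.thick_retract_closed[OF Y] fm_retract src.iso_retract by blast
  show "X \<in> ob T \<Longrightarrow> Z \<in> preim T fo Y \<Longrightarrow> is_summand T X Z \<Longrightarrow> X \<in> preim T fo Y" for X Z
    unfolding preim_def using tgt.thick_retract_closed[OF Y] fm_retract src.summand_retract by blast
  show "Z \<in> preim T fo Y" if "(X,Y1,Z,f,g,h) \<in> dist T" "X \<in> preim T fo Y" "Y1 \<in> preim T fo Y" for X Y1 Z f g h
    using tgt.thick_dist(1)[OF Y fm_dist[OF that(1)]] src.distD[OF that(1)] that(2,3) unfolding preim_def by auto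
  show "X \<in> preim T fo Y" if "(X,Y1,Z,f,g,h) \<in> dist T" "Y1 \<in> preim T fo Y" "Z \<in> preim T fo Y" for X Y1 Z f g h
    using tgt.thick_dist(2)[OF Y fm_dist[OF that(1)]] src.distD[OF that(1)] that(2,3) unfolding preim_def by auto
  show "Y1 \<in> preim T fo Y" if "(X,Y1,Z,f,g,h) \<in> dist T" "Z \<in> preim T fo Y" "X \<in> preim T fo Y" for X Y1 Z f g h
    using tgt.thick_dist(3)[OF Y fm_dist[OF that(1)]] src.distD[OF that(1)] that(2,3) unfolding preim_def by auto
qed

end

locale ff_exact_fun = exact_fun T T' fo fm phi
  for T :: "('o, 'm, 'z) tricat_scheme" and T' :: "('p, 'n, 'y) tricat_scheme"
    and fo :: "'o \<Rightarrow> 'p" and fm phi +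
  assumes fully_faithful: "fully_faithful T T' fo fm"
begin

lemma fm_bij: "X \<in> ob T \<Longrightarrow> Y \<in> ob T \<Longrightarrow> bij_betw (fm X Y) (hom T X Y) (hom T' (fo X) (fo Y))"
  using fully_faithful unfolding fully_faithful_def by blast

lemma fm_inj:
  "X \<in> ob T \<Longrightarrow> Y \<in> ob T \<Longrightarrow> f \<in> hom T X Y \<Longrightarrow> g \<in> hom T X Y \<Longrightarrow> fm X Y f = fm X Y g \<Longrightarrow> f = g"
  using fm_bij unfolding bij_betw_def inj_on_def by blast

lemma fm_surj: "X \<in> ob T \<Longrightarrow> Y \<in> ob T \<Longrightarrow> c \<in> hom T' (fo X) (fo Y) \<Longrightarrow> \<exists>u\<in>hom T X Y. c = fm X Y u"
  using fm_bij unfolding bij_betw_def by blast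

lemma retract_reflect:
  assumes A: "A \<in> ob T" and B: "B \<in> ob T" and AB: "tgt.retract (fo A) (fo B)"
  shows "src.retract A B"
proof -
  obtain i' p' where i': "i' \<in> hom T' (fo A) (fo B)" "p' \<in> hom T' (fo B) (fo A)"
    "cmp T' (fo A) (fo B) (fo A) p' i' = idm T' (fo A)"
    using AB unfolding tgt.retract_def by blast
  obtain i where i: "i \<in> hom T A B" "i' = fm A B i"
    using fm_surj A B i' by blast
  obtain p where p: "p \<in> hom T B A" "p' = fm B A p"
    using fm_surj A B i' by blast
  have "fm A A (cmp T A B A p i) = fm A A (idm T A)"
    using fm_cmp[of A B A i p] i p i' A B by simp
  then have "cmp T A B A p i = idm T A"
    using fm_inj A B i p by (meson src.cmp_closed src.idm_closed)
  then show ?thesis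
    unfolding src.retract_def using i p by blast
qed

text \<open>The inverse of \<open>preim T fo\<close> on thick subcategories.\<close>

definition image_retracts :: "'o set \<Rightarrow> 'p set" where
  "image_retracts S = {X \<in> ob T'. \<exists>M\<in>S. tgt.retract X (fo M)}"

lemma image_retracts_mono: "A \<subseteq> B \<Longrightarrow> image_retracts A \<subseteq> image_retracts B"
  unfolding image_retracts_def by blast

lemma image_retracts_shift:
  assumes S: "thick T S" and X: "X \<in> ob T'" and XS: "X \<in> image_retracts S"
  shows "sho T' X \<in> image_retracts S"
proof -
  obtain M where M: "M \<in> S" "tgt.retract X (fo M)"
    using XS unfolding image_retracts_def by blast
  have Mo: "M \<in> ob T"
    using M src.thick_subset[OF S] by blast
  have "tgt.retract (sho T' X) (sho T' (fo M))"
    using tgt.retract_shift X Mo M(2) by simp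
  moreover have "tgt.retract (sho T' (fo M)) (fo (sho T M))"
    using tgt.iso_retract(2)[OF phi_iso[OF Mo]] .
  ultimately have "tgt.retract (sho T' X) (fo (sho T M))"
    using tgt.retract_trans X Mo by (meson tgt.sho_closed src.sho_closed fo_closed)
  moreover have "sho T M \<in> S"
    using src.thick_shift_iff[OF S Mo] M by blast
  ultimately show ?thesis
    unfolding image_retracts_def using X by blast
qed

lemma image_retracts_unshift:
  assumes S: "thick T S" and X: "X \<in> ob T'" and XS: "sho T' X \<in> image_retracts S"
  shows "X \<in> image_retracts S"
proof -
  obtain M where M: "M \<in> S" "tgt.retract (sho T' X) (fo M)"
    using XS unfolding image_retracts_def by blast
  have Mo: "M \<in> ob T"
    using M src.thick_subset[OF S] by blast
  obtain M' u where M': "M' \<in> ob T" "is_iso T (sho T M') M u"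
    using src.shift_ess_surj Mo by blast
  have "sho T M' \<in> S"
    using src.thick_retract_closed[OF S _ M(1) src.iso_retract(1)[OF M'(2)]] M' by simp
  then have M'S: "M' \<in> S"
    using src.thick_shift_iff[OF S M'(1)] by blast
  have "tgt.retract (fo M) (fo (sho T M'))"
    using fm_retract src.iso_retract(2)[OF M'(2)] Mo M' by simp
  moreover have "tgt.retract (fo (sho T M')) (sho T' (fo M'))"
    using tgt.iso_retract(1)[OF phi_iso[OF M'(1)]] .
  ultimately have "tgt.retract (sho T' X) (sho T' (fo M'))"
    using tgt.retract_trans[OF _ _ _ M(2)] X Mo M' by (meson tgt.retract_trans tgt.sho_closed src.sho_closed fo_closed)
  then have "tgt.retract X (fo M')"
    using tgt.retract_shift X M' by simp
  then show ?thesis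
    unfolding image_retracts_def using X M'S by blast
qed

lemma image_retracts_dist:
  assumes S: "thick T S" and d: "(X1,X2,X3,f,g,h) \<in> dist T'"
    and X1: "X1 \<in> image_retracts S" and X2: "X2 \<in> image_retracts S"
  shows "X3 \<in> image_retracts S"
proof -
  note D = tgt.distD[OF d]
  obtain M1 j1 r1 where M1: "M1 \<in> S" "j1 \<in> hom T' X1 (fo M1)" "r1 \<in> hom T' (fo M1) X1"
    "cmp T' X1 (fo M1) X1 r1 j1 = idm T' X1"
    using X1 unfolding image_retracts_def tgt.retract_def by blast
  obtain M2 j2 r2 where M2: "M2 \<in> S" "j2 \<in> hom T' X2 (fo M2)" "r2 \<in> hom T' (fo M2) X2"
    "cmp T' X2 (fo M2) X2 r2 j2 = idm T' X2"
    using X2 unfolding image_retracts_def tgt.retract_def by blast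
  have M1o: "M1 \<in> ob T" and M2o: "M2 \<in> ob T"
    using M1 M2 src.thick_subset[OF S] by auto
  have "cmp T' (fo M1) X2 (fo M2) j2 (cmp T' (fo M1) X1 X2 f r1) \<in> hom T' (fo M1) (fo M2)"
    using M1 M2 D M1o M2o by (auto intro: tgt.hom_closed)
  then obtain w where w: "w \<in> hom T M1 M2" "cmp T' (fo M1) X2 (fo M2) j2 (cmp T' (fo M1) X1 X2 f r1) = fm M1 M2 w"
    using fm_surj M1o M2o by blast
  obtain M3 g3 h3 where dM: "(M1, M2, M3, w, g3, h3) \<in> dist T"
    using src.dist_cone_exists M1o M2o w by blast
  obtain G H where "(fo M1, fo M2, fo M3, cmp T' (fo M1) X2 (fo M2) j2 (cmp T' (fo M1) X1 X2 f r1), G, H) \<in> dist T'"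
    using fm_dist[OF dM] w by auto
  then have "tgt.retract X3 (fo M3)"
    using tgt.dist_retract_cone[OF d M1(2-4) M2(2-4)] by blast
  moreover have "M3 \<in> S"
    using src.thick_dist(1)[OF S dM M1(1) M2(1)] .
  ultimately show ?thesis
    unfolding image_retracts_def using D by blast
qed

lemma image_retracts_retract:
  assumes S: "thick T S" and X: "X \<in> ob T'" and Y: "Y \<in> image_retracts S" and XY: "tgt.retract X Y"
  shows "X \<in> image_retracts S"
proof -
  obtain M where "M \<in> S" "tgt.retract Y (fo M)"
    using Y unfolding image_retracts_def by blast
  moreover have "Y \<in> ob T'" "M \<in> ob T"
    using Y \<open>M \<in> S\<close> src.thick_subset[OF S] unfolding image_retracts_def by auto
  ultimately show ?thesis
    using tgt.retract_trans[OF X _ _ XY] X unfolding image_retracts_def by blast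
qed

lemma thick_image_retracts:
  assumes S: "thick T S"
  shows "thick T' (image_retracts S)"
proof (rule tgt.thickI)
  show "image_retracts S \<subseteq> ob T'"
    unfolding image_retracts_def by blast
  obtain M where "M \<in> S"
    using src.thick_nonempty[OF S] by blast
  then have "fo M \<in> image_retracts S"
    unfolding image_retracts_def using tgt.retract_refl src.thick_subset[OF S] by blast
  then show "image_retracts S \<noteq> {}"
    by blast
  show "X \<in> ob T' \<Longrightarrow> X \<in> image_retracts S \<longleftrightarrow> sho T' X \<in> image_retracts S" for X
    using image_retracts_shift image_retracts_unshift S by blast
  show "Y \<in> image_retracts S" if "X \<in> ob T'" "Y \<in> ob T'" "is_iso T' X Y u" "X \<in> image_retracts S" for X Y u
    using image_retracts_retract[OF S] tgt.iso_retract(2)[OF that(3)] that by blast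
  show "X \<in> image_retracts S" if "X \<in> ob T'" "Y \<in> image_retracts S" "is_summand T' X Y" for X Y
    using image_retracts_retract[OF S] tgt.summand_retract that by blast
  show "(X,Y,Z,f,g,h) \<in> dist T' \<Longrightarrow> X \<in> image_retracts S \<Longrightarrow> Y \<in> image_retracts S \<Longrightarrow> Z \<in> image_retracts S"
    for X Y Z f g h
    using image_retracts_dist S by blast
  show "X \<in> image_retracts S" if d: "(X,Y,Z,f,g,h) \<in> dist T'" "Y \<in> image_retracts S" "Z \<in> image_retracts S"
    for X Y Z f g h
  proof -
    have "sho T' X \<in> image_retracts S"
      using image_retracts_dist[OF S tgt.dist_rotate[OF d(1)]] d by blast
    then show ?thesis
      using image_retracts_unshift[OF S] tgt.distD[OF d(1)] by blast
  qed
  show "Y \<in> image_retracts S" if d: "(X,Y,Z,f,g,h) \<in> dist T'" "Z \<in> image_retracts S" "X \<in> image_retracts S"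
    for X Y Z f g h
  proof -
    have "sho T' X \<in> image_retracts S"
      using image_retracts_shift[OF S] tgt.distD[OF d(1)] d by blast
    then have "sho T' Y \<in> image_retracts S"
      using image_retracts_dist[OF S tgt.dist_rotate[OF tgt.dist_rotate[OF d(1)]]] d by blast
    then show ?thesis
      using image_retracts_unshift[OF S] tgt.distD[OF d(1)] by blast
  qed
qed

lemma preim_image_retracts:
  assumes S: "thick T S"
  shows "preim T fo (image_retracts S) = S"
proof
  show "S \<subseteq> preim T fo (image_retracts S)"
    unfolding preim_def image_retracts_def using tgt.retract_refl src.thick_subset[OF S] by blast
  show "preim T fo (image_retracts S) \<subseteq> S"
  proof
    fix N assume "N \<in> preim T fo (image_retracts S)"
    then obtain M where N: "N \<in> ob T" and M: "M \<in> S" "tgt.retract (fo N) (fo M)"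
      unfolding preim_def image_retracts_def by blast
    then have "src.retract N M"
      using retract_reflect src.thick_subset[OF S] by blast
    then show "N \<in> S"
      using src.thick_retract_closed[OF S N M(1)] by blast
  qed
qed

end

section \<open>Order isomorphisms\<close>

lemma bij_betw_Ex1_iff:
  assumes g: "bij_betw g A B" and P: "\<And>X. P X \<Longrightarrow> X \<in> A" and Q: "\<And>Y. Q Y \<Longrightarrow> Y \<in> B"
    and PQ: "\<And>X. X \<in> A \<Longrightarrow> P X \<longleftrightarrow> Q (g X)"
  shows "(\<exists>!X. P X) \<longleftrightarrow> (\<exists>!Y. Q Y)"
proof
  assume "\<exists>!X. P X"
  then obtain X where X: "P X" "\<And>X'. P X' \<Longrightarrow> X' = X"
    by blast
  have "Y = g X" if QY: "Q Y" for Y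
  proof -
    obtain X' where "X' \<in> A" "Y = g X'"
      using g Q[OF QY] unfolding bij_betw_def by blast
    then show ?thesis
      using X(2) PQ QY by blast
  qed
  then show "\<exists>!Y. Q Y"
    using PQ P X(1) by blast
next
  assume "\<exists>!Y. Q Y"
  then obtain Y where Y: "Q Y" "\<And>Y'. Q Y' \<Longrightarrow> Y' = Y"
    by blast
  obtain X where X: "X \<in> A" "Y = g X"
    using g Q[OF Y(1)] unfolding bij_betw_def by blast
  have "X' = X" if "P X'" for X'
    using g P[OF that] PQ[OF P[OF that]] that Y(2) X unfolding bij_betw_def inj_on_def by metis
  then show "\<exists>!X. P X"
    using PQ X Y(1) by blast
qed

lemma bij_betw_order_iso_unique_cover:
  assumes g: "bij_betw g \<A> \<B>" and mono: "\<And>A B. A \<in> \<A> \<Longrightarrow> B \<in> \<A> \<Longrightarrow> g A \<subseteq> g B \<longleftrightarrow> A \<subseteq> B"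
    and Q: "Q \<in> \<A>"
  shows "(\<exists>!X. X \<in> \<A> \<and> Q \<subset> X \<and> \<not> (\<exists>X'. X' \<in> \<A> \<and> Q \<subset> X' \<and> X' \<subset> X)) \<longleftrightarrow>
         (\<exists>!Y. Y \<in> \<B> \<and> g Q \<subset> Y \<and> \<not> (\<exists>Y'. Y' \<in> \<B> \<and> g Q \<subset> Y' \<and> Y' \<subset> Y))"
proof (rule bij_betw_Ex1_iff[OF g])
  have strict: "g A \<subset> g B \<longleftrightarrow> A \<subset> B" if "A \<in> \<A>" "B \<in> \<A>" for A B
    using mono[OF that] mono[OF that(2,1)] by (simp add: less_le_not_le)
  have into: "g X \<in> \<B>" if "X \<in> \<A>" for X
    using g that unfolding bij_betw_def by blast
  fix X assume X: "X \<in> \<A>"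
  have "(\<exists>Y'. Y' \<in> \<B> \<and> g Q \<subset> Y' \<and> Y' \<subset> g X) \<longleftrightarrow> (\<exists>X'. X' \<in> \<A> \<and> Q \<subset> X' \<and> X' \<subset> X)"
  proof
    assume "\<exists>Y'. Y' \<in> \<B> \<and> g Q \<subset> Y' \<and> Y' \<subset> g X"
    then obtain Y' where Y': "Y' \<in> \<B>" "g Q \<subset> Y'" "Y' \<subset> g X"
      by blast
    moreover obtain X' where "X' \<in> \<A>" "Y' = g X'"
      using g Y'(1) unfolding bij_betw_def by blast
    ultimately have "X' \<in> \<A>" "g Q \<subset> g X'" "g X' \<subset> g X"
      by simp_all
    then show "\<exists>X'. X' \<in> \<A> \<and> Q \<subset> X' \<and> X' \<subset> X"
      using strict[OF Q] strict[OF _ X] by auto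
  next
    assume "\<exists>X'. X' \<in> \<A> \<and> Q \<subset> X' \<and> X' \<subset> X"
    then obtain X' where "X' \<in> \<A>" "Q \<subset> X'" "X' \<subset> X"
      by blast
    then have "X' \<in> \<A>" "g Q \<subset> g X'" "g X' \<subset> g X"
      using strict[OF Q] strict[OF _ X] by auto
    then show "\<exists>Y'. Y' \<in> \<B> \<and> g Q \<subset> Y' \<and> Y' \<subset> g X"
      using into by blast
  qed
  then show "(X \<in> \<A> \<and> Q \<subset> X \<and> \<not> (\<exists>X'. X' \<in> \<A> \<and> Q \<subset> X' \<and> X' \<subset> X)) \<longleftrightarrow>
      (g X \<in> \<B> \<and> g Q \<subset> g X \<and> \<not> (\<exists>Y'. Y' \<in> \<B> \<and> g Q \<subset> Y' \<and> Y' \<subset> g X))"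
    using X into[OF X] strict[OF Q X] by (simp only: simp_thms)
qed simp_all

section \<open>Equivalences up to direct summands\<close>

lemma Spec_thick: "P \<in> Spec C \<Longrightarrow> thick C P"
  unfolding Spec_def prime_thick_def by blast

lemma preim_Int: "preim C fo (A \<inter> B) = preim C fo A \<inter> preim C fo B"
  unfolding preim_def by blast

locale dense_ff_exact_fun = ff_exact_fun +
  assumes dense: "\<forall>Y\<in>ob T'. \<exists>M\<in>ob T. is_summand T' Y (fo M)"
begin

text \<open>The witness is the cone of a lift \<open>a : M \<rightarrow> M\<close> of the idempotent of \<open>X \<oplus> W = fo M\<close> projecting
  onto \<open>W\<close>.\<close>

lemma ex_image_retract_in_thick_hull:
  assumes X: "X \<in> ob T'"
  shows "\<exists>N\<in>ob T. tgt.retract X (fo N) \<and> (\<forall>Y. thick T' Y \<longrightarrow> X \<in> Y \<longrightarrow> fo N \<in> Y)"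
proof -
  obtain M W i1 i2 p1 p2 where M: "M \<in> ob T" and bp: "is_biproduct T' X W (fo M) i1 i2 p1 p2"
    using dense X unfolding is_summand_def by blast
  have W: "W \<in> ob T'" and i2: "i2 \<in> hom T' W (fo M)" and p2: "p2 \<in> hom T' (fo M) W"
    and p2i2: "cmp T' W (fo M) W p2 i2 = idm T' W"
    using bp unfolding is_biproduct_def by auto
  obtain a where a: "a \<in> hom T M M" "cmp T' (fo M) W (fo M) i2 p2 = fm M M a"
    using fm_surj[OF M M] W i2 p2 M by (meson fo_closed tgt.cmp_closed)
  obtain K g h where dK: "(M, M, K, a, g, h) \<in> dist T"
    using src.dist_cone_exists M a by blast
  obtain h' where dFK: "(fo M, fo M, fo K, cmp T' (fo M) W (fo M) i2 p2, fm M K g, h') \<in> dist T'"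
    using fm_dist[OF dK] a by auto
  obtain Ci g2 g3 where di: "(W, fo M, Ci, i2, g2, g3) \<in> dist T'"
    using tgt.dist_cone_exists W M i2 by blast
  have Ci: "Ci \<in> ob T'" and K: "K \<in> ob T"
    using tgt.distD[OF di] src.distD[OF dK] by auto
  have iso: "is_iso T' X Ci (cmp T' X (fo M) Ci g2 i1)"
    using tgt.biproduct_cone_iso[OF bp di] .
  have "tgt.retract X (fo K)"
    using tgt.retract_trans[OF X Ci _ tgt.iso_retract(1)[OF iso]]
      tgt.dist_cone_split_idempotent(1)[OF i2 p2 p2i2 di dFK] K by simp
  moreover have "fo K \<in> Y" if Y: "thick T' Y" and "X \<in> Y" for Y
    using tgt.dist_cone_split_idempotent(2)[OF i2 p2 p2i2 di dFK Y]
      tgt.thick_iso_closed[OF Y X Ci iso] \<open>X \<in> Y\<close> by blast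
  ultimately show ?thesis
    using K by blast
qed

lemma image_retracts_preim:
  assumes Y: "thick T' Y"
  shows "image_retracts (preim T fo Y) = Y"
proof
  show "image_retracts (preim T fo Y) \<subseteq> Y"
    unfolding image_retracts_def preim_def using tgt.thick_retract_closed[OF Y] by blast
  show "Y \<subseteq> image_retracts (preim T fo Y)"
  proof
    fix X assume "X \<in> Y"
    moreover have X: "X \<in> ob T'"
      using tgt.thick_subset[OF Y] \<open>X \<in> Y\<close> by blast
    ultimately show "X \<in> image_retracts (preim T fo Y)"
      using ex_image_retract_in_thick_hull[OF X] Y unfolding image_retracts_def preim_def by blast
  qed
qed

lemma preim_subset_iff:
  assumes "thick T' A" "thick T' B"
  shows "preim T fo A \<subseteq> preim T fo B \<longleftrightarrow> A \<subseteq> B"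
proof
  assume "preim T fo A \<subseteq> preim T fo B"
  then show "A \<subseteq> B"
    using image_retracts_mono image_retracts_preim assms by metis
qed (auto simp: preim_def)

lemma bij_betw_preim_Th: "bij_betw (preim T fo) (Th T') (Th T)"
  by (rule bij_betw_byWitness[where f' = image_retracts])
    (auto simp: Th_def image_retracts_preim preim_image_retracts preim_thick thick_image_retracts)

lemma preim_thick_join:
  assumes A: "thick T' A" and B: "thick T' B"
  shows "preim T fo (thick_join T' A B) = thick_join T (preim T fo A) (preim T fo B)"
proof
  have AB: "A \<union> B \<subseteq> ob T'"
    using A B tgt.thick_subset by blast
  have pAB: "preim T fo A \<union> preim T fo B \<subseteq> ob T"
    unfolding preim_def by blast
  have J': "thick T' (thick_join T' A B)" "A \<union> B \<subseteq> thick_join T' A B"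
    using tgt.thick_join[OF AB] by auto
  show "thick_join T (preim T fo A) (preim T fo B) \<subseteq> preim T fo (thick_join T' A B)"
    using src.thick_join(3)[OF pAB preim_thick[OF J'(1)]] J'(2) unfolding preim_def by blast
  define J where "J = thick_join T (preim T fo A) (preim T fo B)"
  have J: "thick T J" "preim T fo A \<union> preim T fo B \<subseteq> J"
    unfolding J_def using src.thick_join[OF pAB] by auto
  have "A \<union> B \<subseteq> image_retracts J"
    using preim_subset_iff[OF A thick_image_retracts[OF J(1)]] preim_subset_iff[OF B thick_image_retracts[OF J(1)]]
      preim_image_retracts[OF J(1)] J(2) by auto
  then have "preim T fo (thick_join T' A B) \<subseteq> preim T fo (image_retracts J)"
    using tgt.thick_join(3)[OF AB thick_image_retracts[OF J(1)]] unfolding preim_def by blast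
  then show "preim T fo (thick_join T' A B) \<subseteq> J"
    using preim_image_retracts[OF J(1)] by simp
qed

lemma prime_thick_preim_iff:
  assumes Q: "thick T' Q"
  shows "prime_thick T' Q \<longleftrightarrow> prime_thick T (preim T fo Q)"
proof -
  have "(\<exists>!X. X \<in> Th T' \<and> Q \<subset> X \<and> \<not> (\<exists>X'. X' \<in> Th T' \<and> Q \<subset> X' \<and> X' \<subset> X)) \<longleftrightarrow>
        (\<exists>!Y. Y \<in> Th T \<and> preim T fo Q \<subset> Y \<and> \<not> (\<exists>Y'. Y' \<in> Th T \<and> preim T fo Q \<subset> Y' \<and> Y' \<subset> Y))"
    by (rule bij_betw_order_iso_unique_cover[OF bij_betw_preim_Th])
      (use Q preim_subset_iff in \<open>auto simp: Th_def\<close>)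
  then show ?thesis
    unfolding prime_thick_def Th_def using Q preim_thick[OF Q] by simp
qed

lemma bij_betw_preim_Spec: "bij_betw (preim T fo) (Spec T') (Spec T)"
proof (rule bij_betw_byWitness[where f' = image_retracts])
  show "\<forall>P\<in>Spec T'. image_retracts (preim T fo P) = P"
    using image_retracts_preim Spec_thick by blast
  show "\<forall>P\<in>Spec T. preim T fo (image_retracts P) = P"
    using preim_image_retracts Spec_thick by blast
  show "preim T fo ` Spec T' \<subseteq> Spec T"
    using prime_thick_preim_iff Spec_thick unfolding Spec_def by blast
  show "image_retracts ` Spec T \<subseteq> Spec T'"
  proof
    fix P' assume "P' \<in> image_retracts ` Spec T"
    then obtain P where P: "P \<in> Spec T" "P' = image_retracts P"
      by blast
    then have "prime_thick T (preim T fo P')"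
      using preim_image_retracts[OF Spec_thick] unfolding Spec_def by auto
    then show "P' \<in> Spec T'"
      using prime_thick_preim_iff[OF thick_image_retracts[OF Spec_thick[OF P(1)]]] P(2)
      unfolding Spec_def by simp
  qed
qed

lemma Zset_preim:
  assumes E: "E \<subseteq> ob T"
  shows "{P \<in> Spec T'. preim T fo P \<in> Zset T E} = Zset T' (fo ` E)"
proof -
  have "preim T fo P \<in> Spec T" if "P \<in> Spec T'" for P
    using bij_betw_preim_Spec that unfolding bij_betw_def by blast
  moreover have "preim T fo P \<inter> E = {} \<longleftrightarrow> P \<inter> fo ` E = {}" for P
    using E unfolding preim_def by blast
  ultimately show ?thesis
    unfolding Zset_def by blast
qed

lemma image_preim_Zset:
  assumes E': "E' \<subseteq> ob T'"
  shows "\<exists>E \<subseteq> ob T. preim T fo ` Zset T' E' = Zset T E"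
proof -
  obtain N where N: "\<And>X. X \<in> E' \<Longrightarrow> N X \<in> ob T \<and> tgt.retract X (fo (N X)) \<and>
      (\<forall>Y. thick T' Y \<longrightarrow> X \<in> Y \<longrightarrow> fo (N X) \<in> Y)"
    using ex_image_retract_in_thick_hull E' by (metis subsetD)
  have mem_iff: "X \<in> P \<longleftrightarrow> N X \<in> preim T fo P" if P: "P \<in> Spec T'" and X: "X \<in> E'" for P X
  proof
    show "X \<in> P \<Longrightarrow> N X \<in> preim T fo P"
      using N[OF X] Spec_thick[OF P] unfolding preim_def by blast
    show "N X \<in> preim T fo P \<Longrightarrow> X \<in> P"
      using N[OF X] tgt.thick_retract_closed[OF Spec_thick[OF P]] E' X unfolding preim_def by blast
  qed
  have "preim T fo ` Zset T' E' = Zset T (N ` E')"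
  proof
    show "preim T fo ` Zset T' E' \<subseteq> Zset T (N ` E')"
    proof
      fix Q assume "Q \<in> preim T fo ` Zset T' E'"
      then obtain P where P: "P \<in> Spec T'" "P \<inter> E' = {}" "Q = preim T fo P"
        unfolding Zset_def by blast
      have "Q \<in> Spec T"
        using bij_betw_preim_Spec P unfolding bij_betw_def by blast
      moreover have "Q \<inter> N ` E' = {}"
        using mem_iff[OF P(1)] P(2,3) by blast
      ultimately show "Q \<in> Zset T (N ` E')"
        unfolding Zset_def by blast
    qed
    show "Zset T (N ` E') \<subseteq> preim T fo ` Zset T' E'"
    proof
      fix Q assume "Q \<in> Zset T (N ` E')"
      then have Q: "Q \<in> Spec T" "Q \<inter> N ` E' = {}"
        unfolding Zset_def by auto
      then obtain P where P: "P \<in> Spec T'" "Q = preim T fo P"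
        using bij_betw_preim_Spec unfolding bij_betw_def by blast
      then have "P \<inter> E' = {}"
        using mem_iff Q(2) by blast
      then show "Q \<in> preim T fo ` Zset T' E'"
        using P unfolding Zset_def by blast
    qed
  qed
  moreover have "N ` E' \<subseteq> ob T"
    using N by blast
  ultimately show ?thesis
    by blast
qed

lemma spec_homeo_preim: "spec_homeo T' T (preim T fo)"
proof -
  have "spec_closed T' {P \<in> Spec T'. preim T fo P \<in> A}" if A: "spec_closed T A" for A
  proof -
    obtain E where "E \<subseteq> ob T" "A = Zset T E"
      using A unfolding spec_closed_def by blast
    moreover have "fo ` E \<subseteq> ob T'"
      using \<open>E \<subseteq> ob T\<close> by auto
    ultimately show ?thesis
      unfolding spec_closed_def using Zset_preim by (intro exI[of _ "fo ` E"]) simp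
  qed
  moreover have "spec_closed T (preim T fo ` B)" if B: "spec_closed T' B" for B
  proof -
    obtain E' where "E' \<subseteq> ob T'" "B = Zset T' E'"
      using B unfolding spec_closed_def by blast
    then show ?thesis
      unfolding spec_closed_def using image_preim_Zset by simp
  qed
  ultimately show ?thesis
    unfolding spec_homeo_def using bij_betw_preim_Spec by blast
qed

end

theorem proposition2p11:
  fixes T :: "('o, 'm) tricat" and T' :: "('p, 'n) tricat"
    and fo :: "'o \<Rightarrow> 'p" and fm :: "'o \<Rightarrow> 'o \<Rightarrow> 'm \<Rightarrow> 'n" and phi :: "'o \<Rightarrow> 'n"
  assumes "is_triangulated T" and "is_triangulated T'"
    and "exact_functor T T' fo fm phi"
    and "fully_faithful T T' fo fm"
    and "\<forall>Y\<in>ob T'. \<exists>M\<in>ob T. is_summand T' Y (fo M)"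
  shows "(bij_betw (preim T fo) (Th T') (Th T) \<and>
         (\<forall>A\<in>Th T'. \<forall>B\<in>Th T'.
            preim T fo (A \<inter> B) = preim T fo A \<inter> preim T fo B \<and>
            preim T fo (thick_join T' A B) = thick_join T (preim T fo A) (preim T fo B))) \<and>
         (\<forall>Q. thick T' Q \<longrightarrow> (prime_thick T' Q \<longleftrightarrow> prime_thick T (preim T fo Q))) \<and>
         spec_homeo T' T (preim T fo)"
proof -
  interpret dense_ff_exact_fun T T' fo fm phi
    by unfold_locales (use assms in auto)
  show ?thesis
    using bij_betw_preim_Th preim_thick_join prime_thick_preim_iff spec_homeo_preim
    by (simp add: Th_def preim_Int)
qed

end
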